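(* Let $\mathcal{I}(X,\mathcal{R})$ be an index coding problem with messages $X=\{x_1,\dots,x_m\}$, each in $\mathbb{F}_q^n$, and receivers $R_i=(x_{f(i)},H_i)\in\mathcal{R}$, each with a prescribed error-correcting capability $\delta_i\in\mathbb{Z}_{\ge0}$ satisfying $2\delta_i\le c$. Then there exists a vector linear differential error correcting index code over $\mathbb{F}_q$ of length $c$ and dimension $n$ for this problem (with capabilities $\delta_i$) if and only if there exists a discrete polymatroid $\mathbb{D}$ on the ground set $\{1,\dots,m+2c\}$, representable over $\mathbb{F}_q$, with rank function $r$ and $r(\{1,\dots,m+2c\})=mn+c$, satisfying: (A) $r(\{j\})=n$ for all $j\in\{1,\dots,m\}$; $r(\{1,\dots,m+c\})=mn+c$; and $r(\{m+j\})=1$ for all $j\in\{1,\dots,2c\}$; (B) for every $j\in\{1,\dots,c\}$: $r(\{1,\dots,m\}\cup\{m+j,m+c+j\})=r(\{1,\dots,m\}\cup\{m+j\})=r(\{1,\dots,m\}\cup\{m+c+j\})$; (C) for every receiver $R_i=(x_{f(i)},H_i)$ and every set $\mathcal{F}=\{i_1,\dots,i_{2\delta_i}\}\subseteq\{1,\dots,c\}$ with $|\mathcal{F}|=2\delta_i$, setting $$T_{\mathcal{F},i}=\{1,\dots,m+c\}\setminus\big(\overline{H_i}\cup\{m+i_1,\dots,m+i_{2\delta_i}\}\big),\qquad \mathbb{D}_{\mathcal{F},i}=\mathbb{D}/T_{\mathcal{F},i},$$ one has $r_{\mathbb{D}_{\mathcal{F},i}}(\{f(i)\}\cup S)=r_{\mathbb{D}_{\mathcal{F},i}}(S)$,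 where $S=\{m+c+1,\dots,m+2c\}$ and $\overline{H_i}=\{1,\dots,m\}\setminus\{j: x_j\in H_i\}$.
   Context: Index coding problem: messages $x_1,\dots,x_m\in\mathbb{F}_q^n$ (row vectors), $y=[x_1\ \cdots\ x_m]\in\mathbb{F}_q^{mn}$; each receiver $R_i=(x_{f(i)},H_i)$ demands $x_{f(i)}$ and knows side information $H_i\subseteq X\setminus\{x_{f(i)}\}$. A differential error correcting index code of length $c$ and dimension $n$ is a map $\mathfrak{C}:\mathbb{F}_q^{mn}\to\mathbb{F}_q^c$ such that for each receiver $R_i$ there is a decoding function $\psi_{R_i}$ with $\psi_{R_i}(\mathfrak{C}(y)+\epsilon_i,H_i)=x_{f(i)}$ for all $y\in\mathbb{F}_q^{mn}$ and all $\epsilon_i\in\mathbb{F}_q^c$ of Hamming weight at most $\delta_i$. It is vector linear if $\mathfrak{C}(y)=yL$ for some $mn\times c$ matrix $L$ over $\mathbb{F}_q$. Discrete polymatroid: a nonempty finite $\mathbb{D}\subseteq\mathbb{Z}_{\ge0}^N$ closed under taking componentwise-smaller nonnegative integer vectors and such that for $u,v\in\mathbb{D}$ with $|u|<|v|$ there is $w\in\mathbb{D}$ with $u<w\le u\vee v$; its rank function is $r(A)=\max\{\sum_{j\in A}u_j:u\in\mathbb{D}\}$, $r(\emptyset)=0$, and it determines $\mathbb{D}$. $\mathbb{D}$ is representable over $\mathbb{F}_q$ if there are subspaces $V_1,\dots,V_N$ of an $\mathbb{F}_q$-vector space with $\dim(\sum_{j\in A}V_j)=r(A)$ for all $A$.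 For $T$ a subset of the ground set $E$, the contraction $\mathbb{D}/T$ has ground set $E\setminus T$ and rank function $r_{\mathbb{D}/T}(A)=r(A\cup T)-r(T)$. *)

theory Defs
  imports Complex_Main "HOL-Library.Function_Algebras"
begin

text \<open>Vectors of F_q^k are functions nat => 'a supported on {1..k} (coordinates 1..k).\<close>
definition fvec :: "nat \<Rightarrow> (nat \<Rightarrow> 'a::zero) set" where
  "fvec k = {v. \<forall>t. t \<notin> {1..k} \<longrightarrow> v t = 0}"

definition msgs :: "nat \<Rightarrow> nat \<Rightarrow> (nat \<Rightarrow> nat \<Rightarrow> 'a::zero) set" where
  "msgs m n = {x. (\<forall>j\<in>{1..m}. x j \<in> fvec n) \<and> (\<forall>j. j \<notin> {1..m} \<longrightarrow> x j = (\<lambda>_. 0))}"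

definition hweight :: "(nat \<Rightarrow> 'a::zero) \<Rightarrow> nat" where
  "hweight e = card {t. e t \<noteq> 0}"

definition side_info :: "nat set \<Rightarrow> (nat \<Rightarrow> nat \<Rightarrow> 'a::zero) \<Rightarrow> (nat \<Rightarrow> nat \<Rightarrow> 'a)" where
  "side_info H x = (\<lambda>j. if j \<in> H then x j else (\<lambda>_. 0))"

definition is_diff_ecic ::
  "nat \<Rightarrow> nat \<Rightarrow> nat \<Rightarrow> 'r set \<Rightarrow> ('r \<Rightarrow> nat) \<Rightarrow> ('r \<Rightarrow> nat set) \<Rightarrow> ('r \<Rightarrow> nat)
    \<Rightarrow> ((nat \<Rightarrow> nat \<Rightarrow> 'a::field) \<Rightarrow> (nat \<Rightarrow> 'a)) \<Rightarrow> bool" where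
  "is_diff_ecic m n c I f H \<delta> C \<longleftrightarrow>
     (\<forall>x\<in>msgs m n. C x \<in> fvec c) \<and>
     (\<forall>i\<in>I. \<exists>\<psi>. \<forall>x\<in>msgs m n. \<forall>e\<in>fvec c. hweight e \<le> \<delta> i \<longrightarrow>
         \<psi> (\<lambda>t. C x t + e t) (side_info (H i) x) = x (f i))"

text \<open>y L for y = [x_1 ... x_m] in F_q^{mn} (row r of L, r in 1..mn, corresponds to
  coordinate ((r-1) mod n)+1 of message ((r-1) div n)+1), columns 1..c.\<close>
definition lin_encode :: "nat \<Rightarrow> nat \<Rightarrow> nat \<Rightarrow> (nat \<Rightarrow> nat \<Rightarrow> 'a::field)
    \<Rightarrow> (nat \<Rightarrow> nat \<Rightarrow> 'a) \<Rightarrow> (nat \<Rightarrow> 'a)" where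
  "lin_encode m n c L x = (\<lambda>k. if k \<in> {1..c} then
      (\<Sum>r\<in>{1..m*n}. x ((r - 1) div n + 1) ((r - 1) mod n + 1) * L r k) else 0)"

definition is_vl_diff_ecic ::
  "nat \<Rightarrow> nat \<Rightarrow> nat \<Rightarrow> 'r set \<Rightarrow> ('r \<Rightarrow> nat) \<Rightarrow> ('r \<Rightarrow> nat set) \<Rightarrow> ('r \<Rightarrow> nat)
    \<Rightarrow> 'a::field itself \<Rightarrow> bool" where
  "is_vl_diff_ecic m n c I f H \<delta> _ \<longleftrightarrow>
     (\<exists>L :: nat \<Rightarrow> nat \<Rightarrow> 'a. is_diff_ecic m n c I f H \<delta> (lin_encode m n c L))"

text \<open>A discrete polymatroid on ground set {1..N}: vectors in Z_{>=0}^N are functions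
  nat => nat supported on {1..N}.\<close>
definition discrete_polymatroid :: "nat \<Rightarrow> (nat \<Rightarrow> nat) set \<Rightarrow> bool" where
  "discrete_polymatroid N D \<longleftrightarrow>
     D \<noteq> {} \<and> finite D \<and>
     (\<forall>u\<in>D. \<forall>j. j \<notin> {1..N} \<longrightarrow> u j = 0) \<and>
     (\<forall>u\<in>D. \<forall>v. (\<forall>j. v j \<le> u j) \<longrightarrow> v \<in> D) \<and>
     (\<forall>u\<in>D. \<forall>v\<in>D. (\<Sum>j\<in>{1..N}. u j) < (\<Sum>j\<in>{1..N}. v j) \<longrightarrow>
        (\<exists>w\<in>D. (\<forall>j. u j \<le> w j) \<and> u \<noteq> w \<and> (\<forall>j. w j \<le> max (u j) (v j))))"

definition pm_rank :: "(nat \<Rightarrow> nat) set \<Rightarrow> nat set \<Rightarrow> nat" where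
  "pm_rank D A = Max {(\<Sum>j\<in>A. u j) | u. u \<in> D}"

definition contr_rank :: "(nat set \<Rightarrow> nat) \<Rightarrow> nat set \<Rightarrow> nat set \<Rightarrow> nat" where
  "contr_rank r T A = r (A \<union> T) - r T"

definition fscale :: "'a::field \<Rightarrow> (nat \<Rightarrow> 'a) \<Rightarrow> (nat \<Rightarrow> 'a)" where
  "fscale a v = (\<lambda>t. a * v t)"

definition pm_representable :: "nat \<Rightarrow> (nat \<Rightarrow> nat) set \<Rightarrow> 'a::field itself \<Rightarrow> bool" where
  "pm_representable N D _ \<longleftrightarrow>
     (\<exists>(K::nat) (V :: nat \<Rightarrow> (nat \<Rightarrow> 'a) set).
        (\<forall>j\<in>{1..N}. module.subspace fscale (V j) \<and> V j \<subseteq> {v. \<forall>t\<ge>K. v t = 0}) \<and>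
        (\<forall>A\<subseteq>{1..N}. vector_space.dim fscale (module.span fscale (\<Union>j\<in>A. V j)) = pm_rank D A))"

end

theory Submission
  imports Defs
begin

(*
  Write a vector linear code with encoding matrix L in a basis e_1, ..., e_{mn+c}: message j spans
  the basis vectors of its n rows, error position k spans e_{mn+k}, and received symbol k spans
  column k of [L; I]. The ranks of this subspace arrangement satisfy (A) and (B); conversely, in a
  representation with (A) and (B) the message and error subspaces give such a basis, and (B) forces
  every receiver subspace to be spanned by a column of this shape for some matrix L.

  A linear functional vanishing on the receiver's side of the contraction in (C) is the same as a
  message difference that vanishes on the side information and whose codeword is supported on the
  2 delta_i positions F. Hence (C) for all F says that every such difference with a codeword of
  weight at most 2 delta_i vanishes on the demanded message, which is exactly when receiver i can
  correct delta_i errors. Finally, the rank function of a subspace arrangement is normalised,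
  monotone and submodular, and every such function is the rank function of a discrete polymatroid.
*)

section \<open>Dimension in arbitrary vector spaces\<close>

context vector_space
begin

lemma dim_le_dim_of_subset_span:
  assumes "finite W" "V \<subseteq> span W"
  shows "dim V \<le> dim W"
proof -
  obtain B where B: "B \<subseteq> W" "independent B" "W \<subseteq> span B" "card B = dim W"
    using basis_exists by blast
  have "V \<subseteq> span B"
    using assms(2) span_mono[OF B(3)] by (simp add: span_span)
  then show ?thesis
    using dim_le_card[of V B] finite_subset[OF B(1) assms(1)] B(4) by simp
qed

lemma independent_in_span_bound:
  assumes "finite Y" "independent B" "B \<subseteq> span Y"
  shows "finite B" "card B \<le> dim Y"
proof -
  obtain A where A: "A \<subseteq> Y" "independent A" "Y \<subseteq> span A" "card A = dim Y"
    using basis_exists by blast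
  have "B \<subseteq> span A"
    using assms(3) span_mono[OF A(3)] by (simp add: span_span)
  then show "finite B" "card B \<le> dim Y"
    using independent_span_bound[OF finite_subset[OF A(1) assms(1)] assms(2)] A(4) by simp_all
qed

lemma subset_span_of_dim_eq:
  assumes "finite Y" "X \<subseteq> Y" "dim X = dim Y"
  shows "Y \<subseteq> span X"
proof
  fix y assume y: "y \<in> Y"
  show "y \<in> span X"
  proof (rule ccontr)
    assume y_notin: "y \<notin> span X"
    obtain A where A: "A \<subseteq> X" "independent A" "X \<subseteq> span A" "card A = dim X"
      using basis_exists by blast
    have "y \<notin> span A"
      using y_notin span_mono[OF A(1)] by blast
    then have "independent (insert y A)" "y \<notin> A"
      using independent_insertI[OF _ A(2)] span_base[of y A] by auto
    moreover have "insert y A \<subseteq> span Y"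
      using y A(1) assms(2) span_superset by blast
    ultimately have "card (insert y A) \<le> dim Y"
      using independent_in_span_bound[OF assms(1)] by blast
    moreover have "card (insert y A) = Suc (card A)"
      using \<open>y \<notin> A\<close> A(1) assms(1,2) finite_subset by (metis card_insert_disjoint)
    ultimately show False
      using A(4) assms(3) by linarith
  qed
qed

lemma dim_Un_eq_iff_subset_span:
  assumes "finite X" "finite Y"
  shows "dim (X \<union> Y) = dim Y \<longleftrightarrow> X \<subseteq> span Y"
proof
  assume "dim (X \<union> Y) = dim Y"
  then show "X \<subseteq> span Y"
    using subset_span_of_dim_eq[of "X \<union> Y" Y] assms by auto
next
  assume "X \<subseteq> span Y"
  then have "X \<union> Y \<subseteq> span Y"
    using span_superset by blast
  then have "dim (X \<union> Y) \<le> dim Y"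
    using dim_le_dim_of_subset_span[OF assms(2)] by blast
  moreover have "dim Y \<le> dim (X \<union> Y)"
    using dim_le_dim_of_subset_span[of "X \<union> Y" Y] assms span_superset by blast
  ultimately show "dim (X \<union> Y) = dim Y"
    by simp
qed

lemma independent_of_dim_eq_card:
  assumes "finite X" "dim X = card X"
  shows "independent X"
proof -
  obtain A where A: "A \<subseteq> X" "independent A" "X \<subseteq> span A" "card A = dim X"
    using basis_exists by blast
  have "A = X"
    using card_subset_eq[OF assms(1) A(1)] A(4) assms(2) by simp
  with A(2) show ?thesis
    by simp
qed

text \<open>Submodularity of dimension, with an arbitrary part \<open>Z\<close> of the intersection of the spans
  in place of \<open>X \<inter> Y\<close>: extend a basis of \<open>Z\<close> to bases of \<open>span X\<close> and \<open>span Y\<close>.\<close>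

lemma dim_Un_add_dim_le:
  assumes "finite X" "finite Y" "Z \<subseteq> span X" "Z \<subseteq> span Y"
  shows "dim (X \<union> Y) + dim Z \<le> dim X + dim Y"
proof -
  obtain B where B: "B \<subseteq> Z" "independent B" "Z \<subseteq> span B" "card B = dim Z"
    using basis_exists by blast
  obtain C where C: "B \<subseteq> C" "C \<subseteq> span X" "independent C" "span X \<subseteq> span C"
    using maximal_independent_subset_extend[OF subset_trans[OF B(1) assms(3)] B(2)] by blast
  obtain D where D: "B \<subseteq> D" "D \<subseteq> span Y" "independent D" "span Y \<subseteq> span D"
    using maximal_independent_subset_extend[OF subset_trans[OF B(1) assms(4)] B(2)] by blast
  have C_fin: "finite C" and C_card: "card C \<le> dim X"
    using independent_in_span_bound[OF assms(1) C(3,2)] by auto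
  have D_fin: "finite D" and D_card: "card D \<le> dim Y"
    using independent_in_span_bound[OF assms(2) D(3,2)] by auto
  have "X \<union> Y \<subseteq> span (C \<union> D)"
    using C(4) D(4) span_superset[of X] span_superset[of Y] span_mono[of C "C \<union> D"]
      span_mono[of D "C \<union> D"] by blast
  then have "dim (X \<union> Y) \<le> card (C \<union> D)"
    by (rule dim_le_card) (simp add: C_fin D_fin)
  moreover have "card B \<le> card (C \<inter> D)"
    using C(1) D(1) C_fin by (intro card_mono) auto
  ultimately show ?thesis
    using card_Un_Int[OF C_fin D_fin] C_card D_card B(4) by linarith
qed

lemma span_UN_span: "span (\<Union>j\<in>A. span (G j)) = span (\<Union>j\<in>A. G j)"
proof
  have "(\<Union>j\<in>A. span (G j)) \<subseteq> span (\<Union>j\<in>A. G j)"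
    by (intro UN_least span_mono) blast
  then show "span (\<Union>j\<in>A. span (G j)) \<subseteq> span (\<Union>j\<in>A. G j)"
    by (rule span_minimal[OF _ subspace_span])
  show "span (\<Union>j\<in>A. G j) \<subseteq> span (\<Union>j\<in>A. span (G j))"
    by (intro span_mono UN_mono span_superset) auto
qed

lemma exists_functional_separating:
  assumes "finite U" "v \<notin> span U"
  shows "\<exists>\<phi>. Vector_Spaces.linear scale (*) \<phi> \<and> (\<forall>u\<in>span U. \<phi> u = 0) \<and> \<phi> v = 1"
proof -
  interpret scalars: vector_space_pair scale "(*) :: 'a \<Rightarrow> 'a \<Rightarrow> 'a"
    by (intro vector_space_pair.intro vector_space_axioms) (unfold_locales, simp_all add: algebra_simps)
  obtain A where A: "A \<subseteq> U" "independent A" "U \<subseteq> span A" "card A = dim U"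
    using basis_exists by blast
  have "v \<notin> span A"
    using assms(2) span_mono[OF A(1)] by blast
  then have "independent (insert v A)" "v \<notin> A"
    using independent_insertI[OF _ A(2)] span_base[of v A] by auto
  then obtain \<phi> where \<phi>: "Vector_Spaces.linear scale (*) \<phi>"
    "\<forall>x\<in>insert v A. \<phi> x = (if x = v then 1 else 0)"
    using scalars.linear_independent_extend[of "insert v A" "\<lambda>x. if x = v then 1 else 0"] by blast
  have "\<phi> u = 0" if "u \<in> span U" for u
  proof (rule scalars.linear_eq_0_on_span[OF \<phi>(1)])
    show "u \<in> span A"
      using that span_mono[OF A(3)] span_span[of A] by blast
    show "\<phi> x = 0" if "x \<in> A" for x
      using that \<phi>(2) \<open>v \<notin> A\<close> by auto
  qed
  moreover have "\<phi> v = 1"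
    using \<phi>(2) by simp
  ultimately show ?thesis
    using \<phi>(1) by blast
qed

end

interpretation fs: vector_space "fscale :: 'a::field \<Rightarrow> (nat \<Rightarrow> 'a) \<Rightarrow> _"
  by unfold_locales (auto simp: fscale_def fun_eq_iff algebra_simps)

interpretation functional: vector_space_pair "fscale :: 'a::field \<Rightarrow> (nat \<Rightarrow> 'a) \<Rightarrow> _" "(*)"
  by unfold_locales (simp_all add: algebra_simps)

lemma sum_apply: "sum f A t = (\<Sum>a\<in>A. f a t)"
  by (induct A rule: infinite_finite_induct) auto

lemma fscale_apply: "fscale a v t = a * v t"
  by (simp add: fscale_def)

definition supported_below :: "nat \<Rightarrow> (nat \<Rightarrow> 'a::zero) set" where
  "supported_below K = {v. \<forall>t\<ge>K. v t = 0}"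

lemma finite_supported_below: "finite (supported_below K :: (nat \<Rightarrow> 'a::{zero,finite}) set)"
proof (rule finite_subset)
  show "supported_below K \<subseteq> {v. \<forall>t. (t \<in> {..<K} \<longrightarrow> v t \<in> (UNIV :: 'a set)) \<and> (t \<notin> {..<K} \<longrightarrow> v t = 0)}"
    by (auto simp: supported_below_def)
qed (rule finite_set_of_finite_funs; simp)

lemma subspace_supported_below: "fs.subspace (supported_below K :: (nat \<Rightarrow> 'a::field) set)"
  by (auto simp: fs.subspace_def supported_below_def fscale_apply)

section \<open>Discrete polymatroids from rank functions\<close>

definition polymatroid_of :: "nat \<Rightarrow> (nat set \<Rightarrow> nat) \<Rightarrow> (nat \<Rightarrow> nat) set" where
  "polymatroid_of N r = {u. (\<forall>j. j \<notin> {1..N} \<longrightarrow> u j = 0) \<and> (\<forall>A\<subseteq>{1..N}. (\<Sum>j\<in>A. u j) \<le> r A)}"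

lemma sum_increment:
  fixes u :: "'a \<Rightarrow> nat"
  assumes "finite A"
  shows "(\<Sum>i\<in>A. (u(j := Suc (u j))) i) = (if j \<in> A then Suc (\<Sum>i\<in>A. u i) else (\<Sum>i\<in>A. u i))"
  using assms by (induct A rule: finite_induct) auto

locale polymatroid_rank =
  fixes N :: nat and r :: "nat set \<Rightarrow> nat"
  assumes rank_empty: "r {} = 0"
    and rank_mono: "A \<subseteq> B \<Longrightarrow> B \<subseteq> {1..N} \<Longrightarrow> r A \<le> r B"
    and rank_submodular: "A \<subseteq> {1..N} \<Longrightarrow> B \<subseteq> {1..N} \<Longrightarrow> r (A \<union> B) + r (A \<inter> B) \<le> r A + r B"
begin

abbreviation P :: "(nat \<Rightarrow> nat) set" where
  "P \<equiv> polymatroid_of N r"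

definition tight :: "(nat \<Rightarrow> nat) \<Rightarrow> nat set \<Rightarrow> bool" where
  "tight u A \<longleftrightarrow> A \<subseteq> {1..N} \<and> (\<Sum>j\<in>A. u j) = r A"

lemma sum_le_rank: "u \<in> P \<Longrightarrow> A \<subseteq> {1..N} \<Longrightarrow> (\<Sum>j\<in>A. u j) \<le> r A"
  by (simp add: polymatroid_of_def)

lemma tight_Un:
  assumes u: "u \<in> P" and "tight u A" "tight u B"
  shows "tight u (A \<union> B)"
proof -
  have A: "A \<subseteq> {1..N}" "(\<Sum>j\<in>A. u j) = r A" and B: "B \<subseteq> {1..N}" "(\<Sum>j\<in>B. u j) = r B"
    using assms(2,3) by (simp_all add: tight_def)
  have "(\<Sum>j\<in>A \<union> B. u j) + (\<Sum>j\<in>A \<inter> B. u j) = (\<Sum>j\<in>A. u j) + (\<Sum>j\<in>B. u j)"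
    using A(1) B(1) by (intro sum.union_inter) (auto intro: finite_subset)
  moreover have "(\<Sum>j\<in>A \<union> B. u j) \<le> r (A \<union> B)"
    using sum_le_rank[OF u] A(1) B(1) by simp
  moreover have "(\<Sum>j\<in>A \<inter> B. u j) \<le> r (A \<inter> B)"
    using sum_le_rank[OF u, of "A \<inter> B"] A(1) by blast
  moreover have "r (A \<union> B) + r (A \<inter> B) \<le> r A + r B"
    using rank_submodular[OF A(1) B(1)] .
  ultimately show ?thesis
    using A B by (simp add: tight_def)
qed

lemma tight_cover:
  assumes u: "u \<in> P" and "finite J" and "\<And>j. j \<in> J \<Longrightarrow> \<exists>A. tight u A \<and> j \<in> A"
  shows "\<exists>U. tight u U \<and> J \<subseteq> U"
  using assms(2,3)
proof (induct J rule: finite_induct)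
  case empty
  then show ?case
    using rank_empty by (auto simp: tight_def)
next
  case (insert j J)
  have "\<And>i. i \<in> J \<Longrightarrow> \<exists>A. tight u A \<and> i \<in> A"
    using insert.prems by simp
  then obtain U where U: "tight u U" "J \<subseteq> U"
    using insert.hyps(3) by blast
  obtain A where A: "tight u A" "j \<in> A"
    using insert.prems by blast
  show ?case
    using tight_Un[OF u U(1) A(1)] U(2) A(2) by blast
qed

lemma tight_of_increment_notin:
  assumes u: "u \<in> P" and j: "j \<in> {1..N}" and notin: "u(j := Suc (u j)) \<notin> P"
  shows "\<exists>A. tight u A \<and> j \<in> A"
proof -
  obtain A where A: "A \<subseteq> {1..N}" "\<not> (\<Sum>i\<in>A. (u(j := Suc (u j))) i) \<le> r A"
    using u j notin by (auto simp: polymatroid_of_def)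
  have "finite A"
    using A(1) finite_subset by blast
  then have "j \<in> A \<and> (\<Sum>i\<in>A. u i) = r A"
    using A sum_le_rank[OF u A(1)] sum_increment[of A u j] by (auto split: if_splits)
  then show ?thesis
    using A(1) by (auto simp: tight_def)
qed

lemma finite_polymatroid_of: "finite P"
proof (rule finite_subset)
  show "P \<subseteq> {u. \<forall>j. (j \<in> {1..N} \<longrightarrow> u j \<in> {0..r {1..N}}) \<and> (j \<notin> {1..N} \<longrightarrow> u j = 0)}"
  proof safe
    fix u j assume "u \<in> P" "j \<in> {1..N}"
    then have "u j \<le> r {j}" "r {j} \<le> r {1..N}"
      using sum_le_rank[of u "{j}"] rank_mono[of "{j}" "{1..N}"] by auto
    then show "u j \<in> {0..r {1..N}}"
      by simp
  qed (simp add: polymatroid_of_def)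
qed (rule finite_set_of_finite_funs; simp)

lemma zero_mem_polymatroid_of: "(\<lambda>_. 0) \<in> P"
  by (simp add: polymatroid_of_def)

lemma polymatroid_of_down_closed:
  assumes "u \<in> P" "\<And>j. v j \<le> u j"
  shows "v \<in> P"
proof -
  have "(\<Sum>j\<in>A. v j) \<le> r A" if "A \<subseteq> {1..N}" for A
    using sum_mono[of A v u] assms(2) sum_le_rank[OF assms(1) that] by simp
  moreover have "v j = 0" if "j \<notin> {1..N}" for j
    using assms(1) assms(2)[of j] that by (simp add: polymatroid_of_def)
  ultimately show ?thesis
    by (simp add: polymatroid_of_def)
qed

text \<open>If no coordinate below \<open>v\<close> can be increased, every such coordinate lies in a tight set,
  and a tight set covering all of them shows that \<open>v\<close> is not larger than \<open>u\<close>.\<close>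

lemma polymatroid_of_augment:
  assumes u: "u \<in> P" and v: "v \<in> P" and less: "(\<Sum>j\<in>{1..N}. u j) < (\<Sum>j\<in>{1..N}. v j)"
  shows "\<exists>j\<in>{1..N}. u j < v j \<and> u(j := Suc (u j)) \<in> P"
proof (rule ccontr)
  assume no_increment: "\<not> ?thesis"
  define J where "J = {j\<in>{1..N}. u j < v j}"
  have "\<exists>A. tight u A \<and> j \<in> A" if "j \<in> J" for j
    using that no_increment tight_of_increment_notin[OF u] by (auto simp: J_def)
  then obtain U where U: "tight u U" "J \<subseteq> U"
    using tight_cover[OF u, of J] by (auto simp: J_def)
  have U_sub: "U \<subseteq> {1..N}" and U_tight: "(\<Sum>j\<in>U. u j) = r U"
    using U(1) by (simp_all add: tight_def)
  have "(\<Sum>j\<in>{1..N}. v j) = (\<Sum>j\<in>U. v j) + (\<Sum>j\<in>{1..N} - U. v j)"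
    using sum.subset_diff[OF U_sub, of v] by (simp add: add.commute)
  also have "\<dots> \<le> (\<Sum>j\<in>U. u j) + (\<Sum>j\<in>{1..N} - U. u j)"
  proof (rule add_mono)
    show "(\<Sum>j\<in>U. v j) \<le> (\<Sum>j\<in>U. u j)"
      using sum_le_rank[OF v U_sub] U_tight by simp
    show "(\<Sum>j\<in>{1..N} - U. v j) \<le> (\<Sum>j\<in>{1..N} - U. u j)"
      using U(2) by (intro sum_mono) (auto simp: J_def)
  qed
  also have "\<dots> = (\<Sum>j\<in>{1..N}. u j)"
    using sum.subset_diff[OF U_sub, of u] by simp
  finally show False
    using less by simp
qed

lemma discrete_polymatroid_polymatroid_of: "discrete_polymatroid N P"
  unfolding discrete_polymatroid_def
proof (intro conjI ballI allI impI)
  show "P \<noteq> {}" "finite P"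
    using zero_mem_polymatroid_of finite_polymatroid_of by auto
next
  fix u j assume "u \<in> P" "j \<notin> {1..N}"
  then show "u j = 0"
    by (simp add: polymatroid_of_def)
next
  fix u v assume "u \<in> P" "\<forall>j. v j \<le> u j"
  then show "v \<in> P"
    using polymatroid_of_down_closed by blast
next
  fix u v assume "u \<in> P" "v \<in> P" "(\<Sum>j\<in>{1..N}. u j) < (\<Sum>j\<in>{1..N}. v j)"
  then obtain j where "u j < v j" "u(j := Suc (u j)) \<in> P"
    using polymatroid_of_augment by blast
  moreover have "u \<noteq> u(j := Suc (u j))"
    by (metis fun_upd_same n_not_Suc_n)
  ultimately show "\<exists>w\<in>P. (\<forall>j. u j \<le> w j) \<and> u \<noteq> w \<and> (\<forall>j. w j \<le> max (u j) (v j))"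
    by (intro bexI[of _ "u(j := Suc (u j))"]) auto
qed

text \<open>A vector of \<open>P\<close> supported on \<open>A\<close> with maximal sum cannot be increased inside \<open>A\<close>;
  its tight sets then cover \<open>A\<close>, so its sum is at least \<open>r A\<close>.\<close>

lemma exists_saturated:
  assumes A: "A \<subseteq> {1..N}"
  shows "\<exists>u\<in>P. (\<forall>j. j \<notin> A \<longrightarrow> u j = 0) \<and> (\<forall>j\<in>A. u(j := Suc (u j)) \<notin> P)"
proof -
  define PA where "PA = {u\<in>P. \<forall>j. j \<notin> A \<longrightarrow> u j = 0}"
  have "finite PA" "(\<lambda>_. 0) \<in> PA"
    using finite_polymatroid_of zero_mem_polymatroid_of by (simp_all add: PA_def)
  then obtain u where u: "u \<in> PA" "(\<Sum>j\<in>A. u j) = Max ((\<lambda>w. \<Sum>j\<in>A. w j) ` PA)"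
    using Max_in[of "(\<lambda>w. \<Sum>j\<in>A. w j) ` PA"] by fastforce
  have u_max: "(\<Sum>j\<in>A. w j) \<le> (\<Sum>j\<in>A. u j)" if "w \<in> PA" for w
    unfolding u(2) using \<open>finite PA\<close> that by simp
  have "u(j := Suc (u j)) \<notin> P" if j: "j \<in> A" for j
  proof
    assume "u(j := Suc (u j)) \<in> P"
    then have "u(j := Suc (u j)) \<in> PA"
      using u j by (auto simp: PA_def)
    then show False
      using u_max sum_increment[OF finite_subset[OF A finite_atLeastAtMost], of u j] j by fastforce
  qed
  then show ?thesis
    using u(1) by (auto simp: PA_def)
qed

lemma pm_rank_polymatroid_of:
  assumes A: "A \<subseteq> {1..N}"
  shows "pm_rank P A = r A"
proof -
  have sums_fin: "finite {(\<Sum>j\<in>A. u j) | u. u \<in> P}"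
    using finite_polymatroid_of by simp
  have sums_ne: "{(\<Sum>j\<in>A. u j) | u. u \<in> P} \<noteq> {}"
    using zero_mem_polymatroid_of by blast
  obtain u where uP: "u \<in> P" and u_supp: "\<forall>j. j \<notin> A \<longrightarrow> u j = 0"
    and saturated: "\<forall>j\<in>A. u(j := Suc (u j)) \<notin> P"
    using exists_saturated[OF A] by blast
  have "\<exists>B. tight u B \<and> j \<in> B" if "j \<in> A" for j
    using tight_of_increment_notin[OF uP] saturated that A by blast
  then obtain U where U: "tight u U" "A \<subseteq> U"
    using tight_cover[OF uP finite_subset[OF A finite_atLeastAtMost]] by blast
  have "(\<Sum>j\<in>U. u j) = (\<Sum>j\<in>A. u j)"
    using u_supp U by (intro sum.mono_neutral_right) (auto simp: tight_def intro: finite_subset)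
  then have "r A \<le> (\<Sum>j\<in>A. u j)"
    using U rank_mono[of A U] by (simp add: tight_def)
  also have "\<dots> \<le> pm_rank P A"
    unfolding pm_rank_def using uP by (intro Max_ge[OF sums_fin]) blast
  finally show ?thesis
    unfolding pm_rank_def using sum_le_rank[OF _ A] by (intro antisym Max.boundedI[OF sums_fin sums_ne]) auto
qed

end



section \<open>Decoding linear index codes\<close>

definition row :: "nat \<Rightarrow> nat \<Rightarrow> nat \<Rightarrow> nat" where
  "row n j s = (j - 1) * n + s"

definition msg_of_row :: "nat \<Rightarrow> nat \<Rightarrow> nat" where
  "msg_of_row n r = (r - 1) div n + 1"

definition coord_of_row :: "nat \<Rightarrow> nat \<Rightarrow> nat" where
  "coord_of_row n r = (r - 1) mod n + 1"

lemma
  assumes "j \<ge> 1" "s \<in> {1..n}"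
  shows msg_of_row_row: "msg_of_row n (row n j s) = j"
    and coord_of_row_row: "coord_of_row n (row n j s) = s"
proof -
  obtain j' s' where "j = Suc j'" "s = Suc s'"
    using assms by (cases j; cases s) auto
  moreover have "s' < n"
    using assms \<open>s = Suc s'\<close> by simp
  moreover have "row n j s - 1 = j' * n + s'"
    using \<open>j = Suc j'\<close> \<open>s = Suc s'\<close> by (simp add: row_def)
  ultimately show "msg_of_row n (row n j s) = j" "coord_of_row n (row n j s) = s"
    by (simp_all add: msg_of_row_def coord_of_row_def)
qed

lemma row_mem: "j \<in> {1..m} \<Longrightarrow> s \<in> {1..n} \<Longrightarrow> row n j s \<in> {1..m * n}"
proof -
  assume j: "j \<in> {1..m}" and s: "s \<in> {1..n}"
  have "(j - 1) * n + s \<le> (j - 1) * n + n"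
    using s by simp
  also have "\<dots> = j * n"
    using j by (cases j) auto
  also have "\<dots> \<le> m * n"
    using j by simp
  finally show ?thesis
    using s by (simp add: row_def)
qed

lemma
  assumes "r \<in> {1..m * n}"
  shows msg_of_row_mem: "msg_of_row n r \<in> {1..m}"
    and coord_of_row_mem: "coord_of_row n r \<in> {1..n}"
    and row_msg_of_row: "row n (msg_of_row n r) (coord_of_row n r) = r"
proof -
  have "n > 0" "r - 1 < m * n"
    using assms by (auto intro: Nat.gr0I)
  then show "msg_of_row n r \<in> {1..m}" "coord_of_row n r \<in> {1..n}"
    by (simp_all add: msg_of_row_def coord_of_row_def div_less_iff_less_mult Suc_leI)
  show "row n (msg_of_row n r) (coord_of_row n r) = r"
    using assms div_mult_mod_eq[of "r - 1" n] by (simp add: row_def msg_of_row_def coord_of_row_def)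
qed

lemma UN_rows: "(\<Union>j\<in>{1..m}. row n j ` {1..n}) = {1..m * n}"
proof
  show "(\<Union>j\<in>{1..m}. row n j ` {1..n}) \<subseteq> {1..m * n}"
    by (intro UN_least image_subsetI row_mem)
  show "{1..m * n} \<subseteq> (\<Union>j\<in>{1..m}. row n j ` {1..n})"
  proof
    fix r assume r: "r \<in> {1..m * n}"
    have "r = row n (msg_of_row n r) (coord_of_row n r)"
      using row_msg_of_row[OF r] by simp
    then have "r \<in> row n (msg_of_row n r) ` {1..n}"
      using coord_of_row_mem[OF r] by (rule image_eqI)
    then show "r \<in> (\<Union>j\<in>{1..m}. row n j ` {1..n})"
      by (rule UN_I[OF msg_of_row_mem[OF r]])
  qed
qed

lemma image_shift_atLeastAtMost: "(\<lambda>j. a + (j - b)) ` {b + 1..b + k} = {a + 1..a + (k::nat)}"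
proof (intro equalityI subsetI)
  fix t assume "t \<in> {a + 1..a + k}"
  then show "t \<in> (\<lambda>j. a + (j - b)) ` {b + 1..b + k}"
    by (intro image_eqI[of _ _ "t - a + b"]) auto
qed auto

lemma lin_encode_eq:
  "k \<in> {1..c} \<Longrightarrow>
    lin_encode m n c L x k = (\<Sum>r\<in>{1..m * n}. x (msg_of_row n r) (coord_of_row n r) * L r k)"
  by (simp add: lin_encode_def msg_of_row_def coord_of_row_def)

lemma lin_encode_fvec: "lin_encode m n c L x \<in> fvec c"
  by (simp add: lin_encode_def fvec_def)

lemma lin_encode_diff:
  "lin_encode m n c L (\<lambda>j t. x j t - y j t) k = lin_encode m n c L x k - lin_encode m n c L y k"
  by (simp add: lin_encode_def left_diff_distrib sum_subtractf)

lemma lin_encode_zero: "lin_encode m n c L (\<lambda>j t. 0) = (\<lambda>k. 0)"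
  by (simp add: lin_encode_def fun_eq_iff)

lemma finite_support_fvec: "e \<in> fvec c \<Longrightarrow> finite {t. e t \<noteq> 0}"
  by (rule finite_subset[of _ "{1..c}"]) (auto simp: fvec_def)

lemma hweight_diff_le:
  fixes e e' :: "nat \<Rightarrow> 'a::ab_group_add"
  assumes "e \<in> fvec c" "e' \<in> fvec c"
  shows "hweight (\<lambda>t. e t - e' t) \<le> hweight e + hweight e'"
proof -
  have "hweight (\<lambda>t. e t - e' t) \<le> card ({t. e t \<noteq> 0} \<union> {t. e' t \<noteq> 0})"
    unfolding hweight_def using finite_support_fvec[OF assms(1)] finite_support_fvec[OF assms(2)]
    by (intro card_mono) auto
  also have "\<dots> \<le> hweight e + hweight e'"
    unfolding hweight_def by (rule card_Un_le)
  finally show ?thesis .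
qed

text \<open>For a linear code, two message tuples that agree on the side information and whose codewords
  are at distance at most \<open>2 d\<close> must agree on the demanded message; by linearity it suffices to
  look at their difference \<open>z\<close>.\<close>

definition separating :: "nat \<Rightarrow> nat \<Rightarrow> nat \<Rightarrow> (nat \<Rightarrow> nat \<Rightarrow> 'a::field) \<Rightarrow> nat \<Rightarrow> nat set \<Rightarrow> nat \<Rightarrow> bool" where
  "separating m n c L fi Hi d \<longleftrightarrow> (\<forall>z\<in>msgs m n. (\<forall>j\<in>Hi. z j = (\<lambda>_. 0)) \<longrightarrow>
     hweight (lin_encode m n c L z) \<le> 2 * d \<longrightarrow> z fi = (\<lambda>_. 0))"

lemma decoder_of_separating:
  fixes L :: "nat \<Rightarrow> nat \<Rightarrow> 'a::field"
  assumes sep: "separating m n c L fi Hi d"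
  shows "\<exists>\<psi>. \<forall>x\<in>msgs m n. \<forall>e\<in>fvec c. hweight e \<le> d \<longrightarrow>
           \<psi> (\<lambda>t. lin_encode m n c L x t + e t) (side_info Hi x) = x fi"
proof -
  let ?C = "lin_encode m n c L"
  let ?received = "\<lambda>x y h. \<exists>e\<in>fvec c. hweight e \<le> d \<and> y = (\<lambda>t. ?C x t + e t) \<and> h = side_info Hi x"
  have unique: "x fi = x' fi"
    if x: "x \<in> msgs m n" and x': "x' \<in> msgs m n" and "?received x y h" "?received x' y h"
    for x x' y h
  proof -
    obtain e e' where e: "e \<in> fvec c" "hweight e \<le> d" and e': "e' \<in> fvec c" "hweight e' \<le> d"
      and y: "(\<lambda>t. ?C x t + e t) = (\<lambda>t. ?C x' t + e' t)" and h: "side_info Hi x = side_info Hi x'"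
      using \<open>?received x y h\<close> \<open>?received x' y h\<close> by metis
    define z where "z = (\<lambda>j t. x j t - x' j t)"
    have "z \<in> msgs m n"
      using x x' by (auto simp: z_def msgs_def fvec_def)
    moreover have "\<forall>j\<in>Hi. z j = (\<lambda>_. 0)"
      using h by (auto simp: z_def side_info_def fun_eq_iff split: if_splits)
    moreover have "?C z = (\<lambda>t. e' t - e t)"
      using y by (auto simp: z_def lin_encode_diff fun_eq_iff algebra_simps)
    then have "hweight (?C z) \<le> 2 * d"
      using hweight_diff_le[OF e'(1) e(1)] e(2) e'(2) by simp
    ultimately have "z fi = (\<lambda>_. 0)"
      using sep by (simp add: separating_def)
    then show "x fi = x' fi"
      by (simp add: z_def fun_eq_iff)
  qed
  define \<psi> where "\<psi> y h = (SOME v. \<exists>x\<in>msgs m n. ?received x y h \<and> v = x fi)" for y h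
  have "\<psi> (\<lambda>t. ?C x t + e t) (side_info Hi x) = x fi"
    if "x \<in> msgs m n" "e \<in> fvec c" "hweight e \<le> d" for x e
    unfolding \<psi>_def using that unique by (intro some_equality) blast+
  then show ?thesis
    by blast
qed

text \<open>Split the codeword of \<open>z\<close> into two error patterns of weight at most \<open>d\<close>: then \<open>z\<close> and \<open>0\<close>
  give the same received word and the same side information.\<close>

lemma separating_of_decoder:
  fixes L :: "nat \<Rightarrow> nat \<Rightarrow> 'a::field"
  assumes "\<forall>x\<in>msgs m n. \<forall>e\<in>fvec c. hweight e \<le> d \<longrightarrow>
           \<psi> (\<lambda>t. lin_encode m n c L x t + e t) (side_info Hi x) = x fi"
  shows "separating m n c L fi Hi d"
  unfolding separating_def
proof (intro ballI impI)
  let ?C = "lin_encode m n c L"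
  fix z assume z: "z \<in> msgs m n" and z_side: "\<forall>j\<in>Hi. z j = (\<lambda>_. 0)"
    and weight: "hweight (?C z) \<le> 2 * d"
  define P where "P = {k. ?C z k \<noteq> 0}"
  have "finite P"
    unfolding P_def by (rule finite_support_fvec[OF lin_encode_fvec])
  obtain P1 where P1: "P1 \<subseteq> P" "card P1 = min d (card P)"
    using obtain_subset_with_card_n[of "min d (card P)" P] by auto
  define e1 where "e1 = (\<lambda>k. if k \<in> P1 then - ?C z k else 0)"
  define e2 where "e2 = (\<lambda>k. if k \<in> P - P1 then ?C z k else 0)"
  have "e1 \<in> fvec c" "e2 \<in> fvec c"
    using lin_encode_fvec[of m n c L z] P1(1) by (auto simp: e1_def e2_def P_def fvec_def)
  moreover have "hweight e1 \<le> card P1" "hweight e2 \<le> card (P - P1)"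
    unfolding hweight_def e1_def e2_def using \<open>finite P\<close> P1(1)
    by (auto intro!: card_mono intro: finite_subset)
  moreover have "card (P - P1) \<le> d"
    using weight P1 \<open>finite P\<close> finite_subset[OF P1(1)]
    by (simp add: card_Diff_subset hweight_def P_def)
  ultimately have "\<psi> (\<lambda>t. ?C z t + e1 t) (side_info Hi z) = z fi"
    "\<psi> (\<lambda>t. ?C (\<lambda>j t. 0) t + e2 t) (side_info Hi (\<lambda>j t. 0)) = (\<lambda>_. 0)"
    using assms z P1(2) by (auto simp: msgs_def fvec_def)
  moreover have "(\<lambda>t. ?C z t + e1 t) = (\<lambda>t. ?C (\<lambda>j t. 0) t + e2 t)"
    by (auto simp: lin_encode_zero e1_def e2_def P_def)
  moreover have "side_info Hi z = side_info Hi (\<lambda>j t. 0)"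
    using z_side by (auto simp: side_info_def fun_eq_iff)
  ultimately show "z fi = (\<lambda>_. 0)"
    by metis
qed

lemma is_vl_diff_ecic_iff_separating:
  "is_vl_diff_ecic m n c I f H \<delta> TYPE('a::field) \<longleftrightarrow>
    (\<exists>L :: nat \<Rightarrow> nat \<Rightarrow> 'a. \<forall>i\<in>I. separating m n c L (f i) (H i) (\<delta> i))"
proof
  assume "is_vl_diff_ecic m n c I f H \<delta> TYPE('a)"
  then obtain L :: "nat \<Rightarrow> nat \<Rightarrow> 'a" where L: "is_diff_ecic m n c I f H \<delta> (lin_encode m n c L)"
    by (auto simp: is_vl_diff_ecic_def)
  have "separating m n c L (f i) (H i) (\<delta> i)" if i: "i \<in> I" for i
  proof -
    obtain \<psi> where "\<forall>x\<in>msgs m n. \<forall>e\<in>fvec c. hweight e \<le> \<delta> i \<longrightarrow>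
        \<psi> (\<lambda>t. lin_encode m n c L x t + e t) (side_info (H i) x) = x (f i)"
      using L i unfolding is_diff_ecic_def by blast
    then show ?thesis
      by (rule separating_of_decoder)
  qed
  then show "\<exists>L :: nat \<Rightarrow> nat \<Rightarrow> 'a. \<forall>i\<in>I. separating m n c L (f i) (H i) (\<delta> i)"
    by blast
next
  assume "\<exists>L :: nat \<Rightarrow> nat \<Rightarrow> 'a. \<forall>i\<in>I. separating m n c L (f i) (H i) (\<delta> i)"
  then obtain L :: "nat \<Rightarrow> nat \<Rightarrow> 'a" where "\<forall>i\<in>I. separating m n c L (f i) (H i) (\<delta> i)"
    by blast
  then have "is_diff_ecic m n c I f H \<delta> (lin_encode m n c L)"
    by (simp add: is_diff_ecic_def lin_encode_fvec decoder_of_separating)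
  then show "is_vl_diff_ecic m n c I f H \<delta> TYPE('a)"
    by (auto simp: is_vl_diff_ecic_def)
qed


lemma exists_card_between:
  assumes "finite A" "P \<subseteq> A" "card P \<le> k" "k \<le> card A"
  obtains F where "P \<subseteq> F" "F \<subseteq> A" "card F = k"
proof -
  have "k - card P \<le> card (A - P)"
    using assms by (simp add: card_Diff_subset finite_subset)
  then obtain G where G: "G \<subseteq> A - P" "card G = k - card P"
    by (rule obtain_subset_with_card_n)
  have "card (P \<union> G) = k"
    using G assms by (subst card_Un_disjoint) (auto intro: finite_subset)
  then show thesis
    using that[of "P \<union> G"] G(1) assms(2) by blast
qed

definition contraction_set :: "nat \<Rightarrow> nat \<Rightarrow> nat set \<Rightarrow> nat set \<Rightarrow> nat set" where
  "contraction_set m c Hi F = {1..m + c} - (({1..m} - Hi) \<union> (\<lambda>k. m + k) ` F)"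

lemma contraction_set_eq:
  assumes "F \<subseteq> {1..c}"
  shows "contraction_set m c Hi F = (Hi \<inter> {1..m}) \<union> (\<lambda>k. m + k) ` ({1..c} - F)"
proof (intro equalityI subsetI)
  fix j assume j: "j \<in> contraction_set m c Hi F"
  show "j \<in> (Hi \<inter> {1..m}) \<union> (\<lambda>k. m + k) ` ({1..c} - F)"
  proof (cases "j \<le> m")
    case False
    then have "j - m \<in> {1..c} - F" "j = m + (j - m)"
      using j by (force simp: contraction_set_def)+
    then show ?thesis
      by blast
  qed (use j in \<open>auto simp: contraction_set_def\<close>)
qed (use assms in \<open>auto simp: contraction_set_def\<close>)

section \<open>The subspace arrangement of a linear code\<close>

definition unit_vec :: "nat \<Rightarrow> nat \<Rightarrow> 'a::zero_neq_one" where
  "unit_vec t = (\<lambda>i. if i = t then 1 else 0)"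

text \<open>The subspace arrangement of a linear code written in a basis \<open>e 1, \<dots>, e (m n + c)\<close>:
  message \<open>j\<close> is spanned by the basis vectors of its rows, error position \<open>k\<close> by \<open>e (m n + k)\<close>, and
  received symbol \<open>k\<close> by column \<open>k\<close> of the generator matrix \<open>[L; I]\<close> written in this basis.\<close>

locale standard_family =
  fixes m n c :: nat and e :: "nat \<Rightarrow> nat \<Rightarrow> 'a::field" and L :: "nat \<Rightarrow> nat \<Rightarrow> 'a"
  assumes inj_on_e: "inj_on e {1..m * n + c}"
    and independent_e: "fs.independent (e ` {1..m * n + c})"
begin

definition col :: "nat \<Rightarrow> nat \<Rightarrow> 'a" where
  "col k = e (m * n + k) + (\<Sum>r\<in>{1..m * n}. fscale (L r k) (e r))"

definition gens :: "nat \<Rightarrow> (nat \<Rightarrow> 'a) set" where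
  "gens j = (if j \<in> {1..m} then (\<lambda>s. e (row n j s)) ` {1..n}
     else if j \<in> {m + 1..m + c} then {e (m * n + (j - m))}
     else if j \<in> {m + c + 1..m + 2 * c} then {col (j - m - c)} else {})"

definition rank_gens :: "nat set \<Rightarrow> nat" where
  "rank_gens A = fs.dim (\<Union>j\<in>A. gens j)"

lemma gens_msg: "j \<in> {1..m} \<Longrightarrow> gens j = e ` row n j ` {1..n}"
  by (simp add: gens_def image_image)

lemma gens_err: "k \<in> {1..c} \<Longrightarrow> gens (m + k) = {e (m * n + k)}"
  by (simp add: gens_def)

lemma gens_col: "k \<in> {1..c} \<Longrightarrow> gens (m + c + k) = {col k}"
  by (simp add: gens_def)

lemma gens_outside: "j \<notin> {1..m + 2 * c} \<Longrightarrow> gens j = {}"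
  by (auto simp: gens_def)

lemma finite_UN_gens: "finite (\<Union>j\<in>A. gens j)"
proof (rule finite_subset)
  show "(\<Union>j\<in>A. gens j) \<subseteq> (\<Union>j\<in>{1..m + 2 * c}. gens j)"
    using gens_outside by blast
  show "finite (\<Union>j\<in>{1..m + 2 * c}. gens j)"
    by (simp add: gens_def)
qed

lemma UN_gens_msgs: "(\<Union>j\<in>{1..m}. gens j) = e ` {1..m * n}"
proof -
  have "(\<Union>j\<in>{1..m}. gens j) = e ` (\<Union>j\<in>{1..m}. row n j ` {1..n})"
    by (simp add: gens_msg image_UN)
  then show ?thesis
    by (simp only: UN_rows)
qed

lemma UN_gens_errs: "(\<Union>j\<in>{m + 1..m + c}. gens j) = e ` {m * n + 1..m * n + c}"
proof -
  have "(\<Union>j\<in>{m + 1..m + c}. gens j) = e ` (\<lambda>j. m * n + (j - m)) ` {m + 1..m + c}"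
    by (auto simp: gens_def)
  moreover have "(\<lambda>j. m * n + (j - m)) ` {m + 1..m + c} = {m * n + 1..m * n + c}"
    by (rule image_shift_atLeastAtMost)
  ultimately show ?thesis
    by simp
qed

lemma UN_gens_cols: "(\<Union>j\<in>{m + c + 1..m + 2 * c}. gens j) = col ` {1..c}"
proof -
  have "(\<Union>j\<in>{m + c + 1..m + 2 * c}. gens j) = col ` (\<lambda>j. j - m - c) ` {m + c + 1..m + 2 * c}"
    by (auto simp: gens_def)
  moreover have "(\<lambda>j. j - m - c) ` {m + c + 1..m + 2 * c} = {1..c}"
  proof (intro equalityI subsetI)
    fix k assume "k \<in> {1..c}"
    then show "k \<in> (\<lambda>j. j - m - c) ` {m + c + 1..m + 2 * c}"
      by (intro image_eqI[of _ _ "k + m + c"]) auto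
  qed auto
  ultimately show ?thesis
    by simp
qed

lemma UN_gens_msgs_errs: "(\<Union>j\<in>{1..m + c}. gens j) = e ` {1..m * n + c}"
proof -
  have "{1..m + c} = {1..m} \<union> {m + 1..m + c}" "{1..m * n + c} = {1..m * n} \<union> {m * n + 1..m * n + c}"
    by auto
  then show ?thesis
    using UN_gens_msgs UN_gens_errs by (simp add: image_Un)
qed

lemma dim_e_image: "S \<subseteq> {1..m * n + c} \<Longrightarrow> fs.dim (e ` S) = card S"
  using fs.dim_eq_card_independent[OF fs.independent_mono[OF independent_e]]
    card_image[OF inj_on_subset[OF inj_on_e]] by (simp add: image_mono)

lemma err_notin_span_msgs: "k \<in> {1..c} \<Longrightarrow> e (m * n + k) \<notin> fs.span (e ` {1..m * n})"
proof
  assume k: "k \<in> {1..c}" and "e (m * n + k) \<in> fs.span (e ` {1..m * n})"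
  moreover have "e ` {1..m * n} \<subseteq> e ` {1..m * n + c} - {e (m * n + k)}"
    using k inj_on_e by (auto simp: inj_on_eq_iff)
  ultimately have "e (m * n + k) \<in> fs.span (e ` {1..m * n + c} - {e (m * n + k)})"
    using fs.span_mono by blast
  moreover have "e (m * n + k) \<in> e ` {1..m * n + c}"
    using k by simp
  ultimately show False
    using independent_e fs.dependent_def by blast
qed

lemma sum_e_mem_span: "(\<Sum>r\<in>{1..m * n}. fscale (a r) (e r)) \<in> fs.span (e ` {1..m * n})"
  by (intro fs.span_sum fs.span_scale fs.span_base) auto

lemma col_mem_span: "col k \<in> fs.span (insert (e (m * n + k)) (e ` {1..m * n}))"
proof -
  have "(\<Sum>r\<in>{1..m * n}. fscale (L r k) (e r)) \<in> fs.span (insert (e (m * n + k)) (e ` {1..m * n}))"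
    by (rule subsetD[OF fs.span_mono[OF subset_insertI] sum_e_mem_span])
  then show ?thesis
    unfolding col_def by (rule fs.span_add[OF fs.span_base[OF insertI1]])
qed

lemma err_mem_span: "e (m * n + k) \<in> fs.span (insert (col k) (e ` {1..m * n}))"
proof -
  have "(\<Sum>r\<in>{1..m * n}. fscale (L r k) (e r)) \<in> fs.span (insert (col k) (e ` {1..m * n}))"
    by (rule subsetD[OF fs.span_mono[OF subset_insertI] sum_e_mem_span])
  then have "col k - (\<Sum>r\<in>{1..m * n}. fscale (L r k) (e r)) \<in> fs.span (insert (col k) (e ` {1..m * n}))"
    by (rule fs.span_diff[OF fs.span_base[OF insertI1]])
  then show ?thesis
    by (simp add: col_def)
qed

lemma col_ne_zero: "k \<in> {1..c} \<Longrightarrow> col k \<noteq> 0"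
  using err_notin_span_msgs[of k] err_mem_span[of k] by (metis fs.span_insert_0)

lemma err_ne_zero: "k \<in> {1..c} \<Longrightarrow> e (m * n + k) \<noteq> 0"
  using err_notin_span_msgs[of k] fs.span_zero by metis

lemma rank_gens_msg: "j \<in> {1..m} \<Longrightarrow> rank_gens {j} = n"
proof -
  assume j: "j \<in> {1..m}"
  have "inj_on (row n j) {1..n}"
    by (rule inj_onI) (simp add: row_def)
  moreover have "row n j ` {1..n} \<subseteq> {1..m * n + c}"
    using row_mem[OF j] by fastforce
  ultimately show ?thesis
    by (simp add: rank_gens_def gens_msg[OF j] dim_e_image card_image)
qed

lemma rank_gens_msgs_errs: "rank_gens {1..m + c} = m * n + c"
  unfolding rank_gens_def UN_gens_msgs_errs using dim_e_image[of "{1..m * n + c}"] by simp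

lemma rank_gens_err_or_col: "j \<in> {1..2 * c} \<Longrightarrow> rank_gens {m + j} = 1"
proof -
  assume j: "j \<in> {1..2 * c}"
  have dim_single: "fs.dim {v} = 1" if "v \<noteq> 0" for v :: "nat \<Rightarrow> 'a"
    using fs.dim_eq_card_independent[of "{v}"] that by simp
  show ?thesis
  proof (cases "j \<le> c")
    case True
    then show ?thesis
      using j gens_err[of j] dim_single[OF err_ne_zero[of j]] by (simp add: rank_gens_def)
  next
    case False
    then have "j - c \<in> {1..c}" "m + j = m + c + (j - c)"
      using j by auto
    then show ?thesis
      using gens_col[of "j - c"] dim_single[OF col_ne_zero[of "j - c"]] by (simp add: rank_gens_def)
  qed
qed

lemma UN_gens_all: "(\<Union>j\<in>{1..m + 2 * c}. gens j) = col ` {1..c} \<union> e ` {1..m * n + c}"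
proof -
  have "{1..m + 2 * c} = {1..m + c} \<union> {m + c + 1..m + 2 * c}"
    by auto
  then show ?thesis
    by (simp only: UN_Un UN_gens_msgs_errs UN_gens_cols Un_commute)
qed

lemma col_mem_span_all: "k \<in> {1..c} \<Longrightarrow> col k \<in> fs.span (e ` {1..m * n + c})"
proof -
  assume "k \<in> {1..c}"
  then have "insert (e (m * n + k)) (e ` {1..m * n}) \<subseteq> e ` {1..m * n + c}"
    by auto
  then show ?thesis
    using col_mem_span[of k] fs.span_mono by blast
qed

lemma rank_gens_all: "rank_gens {1..m + 2 * c} = m * n + c"
proof -
  have "fs.dim (col ` {1..c} \<union> e ` {1..m * n + c}) = fs.dim (e ` {1..m * n + c})"
    using col_mem_span_all by (subst fs.dim_Un_eq_iff_subset_span) auto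
  then show ?thesis
    unfolding rank_gens_def UN_gens_all using dim_e_image[of "{1..m * n + c}"] by simp
qed

lemma gens_subset_span: "gens j \<subseteq> fs.span (e ` {1..m * n + c})"
proof (cases "j \<in> {1..m + 2 * c}")
  case True
  then have "gens j \<subseteq> col ` {1..c} \<union> e ` {1..m * n + c}"
    unfolding UN_gens_all[symmetric] by blast
  then show ?thesis
    using col_mem_span_all fs.span_superset by blast
qed (simp add: gens_outside)

lemma
  assumes k: "k \<in> {1..c}"
  shows rank_gens_err_col: "rank_gens ({1..m} \<union> {m + k, m + c + k}) = rank_gens ({1..m} \<union> {m + k})"
    and rank_gens_err_eq_col: "rank_gens ({1..m} \<union> {m + k}) = rank_gens ({1..m} \<union> {m + c + k})"
proof -
  let ?M = "e ` {1..m * n}"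
  have gens_Un: "(\<Union>j\<in>{1..m} \<union> B. gens j) = (\<Union>j\<in>B. gens j) \<union> ?M" for B
    using UN_gens_msgs by blast
  have both: "rank_gens ({1..m} \<union> {m + k, m + c + k}) = fs.dim ({col k} \<union> insert (e (m * n + k)) ?M)"
    unfolding rank_gens_def gens_Un by (simp add: gens_err[OF k] gens_col[OF k] insert_commute)
  have err: "rank_gens ({1..m} \<union> {m + k}) = fs.dim (insert (e (m * n + k)) ?M)"
    unfolding rank_gens_def gens_Un by (simp add: gens_err[OF k])
  have col: "rank_gens ({1..m} \<union> {m + c + k}) = fs.dim (insert (col k) ?M)"
    unfolding rank_gens_def gens_Un by (simp add: gens_col[OF k])
  have "fs.dim ({col k} \<union> insert (e (m * n + k)) ?M) = fs.dim (insert (e (m * n + k)) ?M)"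
    using col_mem_span[of k] by (subst fs.dim_Un_eq_iff_subset_span) auto
  moreover have "fs.dim ({e (m * n + k)} \<union> insert (col k) ?M) = fs.dim (insert (col k) ?M)"
    using err_mem_span[of k] by (subst fs.dim_Un_eq_iff_subset_span) auto
  moreover have "{e (m * n + k)} \<union> insert (col k) ?M = {col k} \<union> insert (e (m * n + k)) ?M"
    by blast
  ultimately show "rank_gens ({1..m} \<union> {m + k, m + c + k}) = rank_gens ({1..m} \<union> {m + k})"
    and "rank_gens ({1..m} \<union> {m + k}) = rank_gens ({1..m} \<union> {m + c + k})"
    using both err col by simp_all
qed

sublocale polymatroid_rank "m + 2 * c" rank_gens
proof
  show "rank_gens {} = 0"
    using fs.dim_eq_card_independent[OF fs.independent_empty] by (simp add: rank_gens_def)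
next
  fix A B :: "nat set" assume "A \<subseteq> B"
  then show "rank_gens A \<le> rank_gens B"
    unfolding rank_gens_def using finite_UN_gens fs.span_superset
    by (intro fs.dim_le_dim_of_subset_span) blast+
next
  fix A B :: "nat set"
  have "(\<Union>j\<in>A \<inter> B. gens j) \<subseteq> fs.span (\<Union>j\<in>A. gens j)" "(\<Union>j\<in>A \<inter> B. gens j) \<subseteq> fs.span (\<Union>j\<in>B. gens j)"
    using fs.span_superset by blast+
  then show "rank_gens (A \<union> B) + rank_gens (A \<inter> B) \<le> rank_gens A + rank_gens B"
    using fs.dim_Un_add_dim_le[OF finite_UN_gens finite_UN_gens] by (simp add: rank_gens_def)
qed

text \<open>A linear functional is determined by the message tuple \<open>msgs_of \<phi>\<close> it reads off the rows
  and by its values on the error vectors.\<close>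

definition msgs_of :: "((nat \<Rightarrow> 'a) \<Rightarrow> 'a) \<Rightarrow> nat \<Rightarrow> nat \<Rightarrow> 'a" where
  "msgs_of \<phi> = (\<lambda>j s. if j \<in> {1..m} \<and> s \<in> {1..n} then \<phi> (e (row n j s)) else 0)"

lemma msgs_of_mem_msgs: "msgs_of \<phi> \<in> msgs m n"
  by (auto simp: msgs_of_def msgs_def fvec_def)

lemma functional_col:
  assumes \<phi>: "Vector_Spaces.linear fscale (*) \<phi>" and k: "k \<in> {1..c}"
  shows "\<phi> (col k) = \<phi> (e (m * n + k)) + lin_encode m n c L (msgs_of \<phi>) k"
proof -
  have "msgs_of \<phi> (msg_of_row n r) (coord_of_row n r) = \<phi> (e r)" if "r \<in> {1..m * n}" for r
    using msg_of_row_mem[OF that] coord_of_row_mem[OF that] row_msg_of_row[OF that]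
    by (simp add: msgs_of_def)
  then have "\<phi> (\<Sum>r\<in>{1..m * n}. fscale (L r k) (e r)) = lin_encode m n c L (msgs_of \<phi>) k"
    using k by (simp add: functional.linear_sum[OF \<phi>] functional.linear_scale[OF \<phi>] lin_encode_eq mult.commute)
  then show ?thesis
    by (simp add: col_def functional.linear_add[OF \<phi>])
qed

lemma exists_functional:
  assumes z: "z \<in> msgs m n"
  obtains \<phi> where "Vector_Spaces.linear fscale (*) \<phi>" "msgs_of \<phi> = z"
    "\<And>k. k \<in> {1..c} \<Longrightarrow> \<phi> (e (m * n + k)) = - lin_encode m n c L z k"
proof -
  define val where "val v = (let r = inv_into {1..m * n + c} e v in
    if r \<le> m * n then z (msg_of_row n r) (coord_of_row n r) else - lin_encode m n c L z (r - m * n))"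
    for v
  obtain \<phi> where \<phi>: "Vector_Spaces.linear fscale (*) \<phi>" "\<forall>v\<in>e ` {1..m * n + c}. \<phi> v = val v"
    using functional.linear_independent_extend[OF independent_e] by blast
  have \<phi>_e: "\<phi> (e r) = (if r \<le> m * n then z (msg_of_row n r) (coord_of_row n r)
      else - lin_encode m n c L z (r - m * n))" if "r \<in> {1..m * n + c}" for r
    using \<phi>(2) that inv_into_f_f[OF inj_on_e that] by (simp add: val_def)
  have "msgs_of \<phi> j s = z j s" for j s
  proof (cases "j \<in> {1..m} \<and> s \<in> {1..n}")
    case True
    then have "row n j s \<in> {1..m * n}"
      using row_mem[of j m s n] by blast
    then show ?thesis
      using True \<phi>_e[of "row n j s"] msg_of_row_row[of j s n] coord_of_row_row[of j s n]
      by (simp add: msgs_of_def)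
  next
    case False
    then show ?thesis
      using z by (auto simp: msgs_of_def msgs_def fvec_def)
  qed
  moreover have "\<phi> (e (m * n + k)) = - lin_encode m n c L z k" if "k \<in> {1..c}" for k
    using \<phi>_e[of "m * n + k"] that by simp
  ultimately show thesis
    using that \<phi>(1) by blast
qed

lemma UN_gens_receiver_side:
  assumes "F \<subseteq> {1..c}"
  shows "(\<Union>j\<in>{m + c + 1..m + 2 * c} \<union> contraction_set m c Hi F. gens j) =
    col ` {1..c} \<union> (\<Union>j\<in>Hi \<inter> {1..m}. gens j) \<union> (\<lambda>k. e (m * n + k)) ` ({1..c} - F)"
proof -
  have "(\<Union>j\<in>(\<lambda>k. m + k) ` ({1..c} - F). gens j) = (\<Union>k\<in>{1..c} - F. gens (m + k))"
    by (simp add: image_comp)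
  also have "\<dots> = (\<lambda>k. e (m * n + k)) ` ({1..c} - F)"
    using gens_err by auto
  finally show ?thesis
    by (simp only: contraction_set_eq[OF assms] UN_Un UN_gens_cols Un_assoc)
qed

lemma functional_vanishes_on_receiver_side:
  assumes \<phi>: "Vector_Spaces.linear fscale (*) \<phi>" and F: "F \<subseteq> {1..c}"
  shows "(\<forall>u\<in>(\<Union>j\<in>{m + c + 1..m + 2 * c} \<union> contraction_set m c Hi F. gens j). \<phi> u = 0) \<longleftrightarrow>
    (\<forall>k\<in>{1..c}. \<phi> (col k) = 0) \<and> (\<forall>j\<in>Hi. msgs_of \<phi> j = (\<lambda>_. 0)) \<and>
    (\<forall>k\<in>{1..c} - F. \<phi> (e (m * n + k)) = 0)"
proof -
  have "(\<forall>u\<in>(\<Union>j\<in>Hi \<inter> {1..m}. gens j). \<phi> u = 0) \<longleftrightarrow>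
      (\<forall>j\<in>Hi \<inter> {1..m}. \<forall>s\<in>{1..n}. \<phi> (e (row n j s)) = 0)"
    by (auto simp: gens_msg)
  also have "\<dots> \<longleftrightarrow> (\<forall>j\<in>Hi. msgs_of \<phi> j = (\<lambda>_. 0))"
    by (auto simp: msgs_of_def fun_eq_iff)
  finally have msgs: "(\<forall>u\<in>(\<Union>j\<in>Hi \<inter> {1..m}. gens j). \<phi> u = 0) \<longleftrightarrow>
      (\<forall>j\<in>Hi. msgs_of \<phi> j = (\<lambda>_. 0))" .
  show ?thesis
    unfolding UN_gens_receiver_side[OF F] ball_Un msgs by simp
qed

text \<open>A functional vanishing on the receiver's side of the contraction is the same as a message
  difference that vanishes on the side information and is encoded into \<open>F\<close>; so the demanded message
  lies in the span of that side exactly when no such difference touches it.\<close>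

lemma demand_vanishes_of_demand_in_span:
  assumes fi: "fi \<in> {1..m}" and F: "F \<subseteq> {1..c}"
    and incl: "gens fi \<subseteq> fs.span (\<Union>j\<in>{m + c + 1..m + 2 * c} \<union> contraction_set m c Hi F. gens j)"
      (is "_ \<subseteq> fs.span ?G")
    and z: "z \<in> msgs m n" and z_side: "\<forall>j\<in>Hi. z j = (\<lambda>_. 0)"
    and z_supp: "{k. lin_encode m n c L z k \<noteq> 0} \<subseteq> F"
  shows "z fi = (\<lambda>_. 0)"
proof -
  obtain \<phi> where \<phi>: "Vector_Spaces.linear fscale (*) \<phi>" "msgs_of \<phi> = z"
    and \<phi>_err: "\<And>k. k \<in> {1..c} \<Longrightarrow> \<phi> (e (m * n + k)) = - lin_encode m n c L z k"
    using exists_functional[OF z] by blast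
  have vanish: "\<forall>u\<in>?G. \<phi> u = 0"
  proof (subst functional_vanishes_on_receiver_side[OF \<phi>(1) F], intro conjI ballI)
    fix k assume k: "k \<in> {1..c}"
    show "\<phi> (col k) = 0"
      using functional_col[OF \<phi>(1) k] \<phi>_err[OF k] \<phi>(2) by simp
  next
    fix j assume "j \<in> Hi"
    then show "msgs_of \<phi> j = (\<lambda>_. 0)"
      using z_side \<phi>(2) by simp
  next
    fix k assume k: "k \<in> {1..c} - F"
    then have "lin_encode m n c L z k = 0"
      using z_supp by blast
    then show "\<phi> (e (m * n + k)) = 0"
      using \<phi>_err k by simp
  qed
  have "\<phi> (e (row n fi s)) = 0" if "s \<in> {1..n}" for s
  proof (rule functional.linear_eq_0_on_span[OF \<phi>(1)])
    show "e (row n fi s) \<in> fs.span ?G"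
      using incl that gens_msg[OF fi] by blast
  qed (use vanish in blast)
  then have "msgs_of \<phi> fi s = 0" for s
    by (simp add: msgs_of_def)
  then show ?thesis
    using \<phi>(2) by auto
qed

lemma demand_in_span_of_demand_vanishes:
  assumes fi: "fi \<in> {1..m}" and F: "F \<subseteq> {1..c}"
    and sep: "\<forall>z\<in>msgs m n. (\<forall>j\<in>Hi. z j = (\<lambda>_. 0)) \<longrightarrow> {k. lin_encode m n c L z k \<noteq> 0} \<subseteq> F \<longrightarrow>
      z fi = (\<lambda>_. 0)"
  shows "gens fi \<subseteq> fs.span (\<Union>j\<in>{m + c + 1..m + 2 * c} \<union> contraction_set m c Hi F. gens j)"
    (is "_ \<subseteq> fs.span ?G")
proof (rule subsetI, rule ccontr)
  fix v assume v: "v \<in> gens fi" and v_notin: "v \<notin> fs.span ?G"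
  obtain \<phi> where \<phi>: "Vector_Spaces.linear fscale (*) \<phi>" "\<forall>u\<in>fs.span ?G. \<phi> u = 0" "\<phi> v = 1"
    using fs.exists_functional_separating[OF finite_UN_gens v_notin] by blast
  have "\<forall>u\<in>?G. \<phi> u = 0"
    by (simp add: \<phi>(2) fs.span_base)
  then have col: "\<forall>k\<in>{1..c}. \<phi> (col k) = 0" and side: "\<forall>j\<in>Hi. msgs_of \<phi> j = (\<lambda>_. 0)"
    and err: "\<forall>k\<in>{1..c} - F. \<phi> (e (m * n + k)) = 0"
    unfolding functional_vanishes_on_receiver_side[OF \<phi>(1) F] by simp_all
  have "k \<in> F" if "lin_encode m n c L (msgs_of \<phi>) k \<noteq> 0" for k
  proof -
    have k: "k \<in> {1..c}"
      using that by (auto simp: lin_encode_def split: if_splits)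
    show "k \<in> F"
    proof (rule ccontr)
      assume "k \<notin> F"
      then have "\<phi> (e (m * n + k)) = 0" "\<phi> (col k) = 0"
        using col err k by simp_all
      then show False
        using that functional_col[OF \<phi>(1) k] by simp
    qed
  qed
  then have "{k. lin_encode m n c L (msgs_of \<phi>) k \<noteq> 0} \<subseteq> F"
    by blast
  then have "msgs_of \<phi> fi = (\<lambda>_. 0)"
    using sep msgs_of_mem_msgs side by blast
  moreover obtain s where "s \<in> {1..n}" "v = e (row n fi s)"
    using v gens_msg[OF fi] by blast
  then have "msgs_of \<phi> fi s = 1"
    using fi \<phi>(3) by (simp add: msgs_of_def)
  ultimately show False
    by simp
qed

lemma demand_in_span_iff:
  assumes "fi \<in> {1..m}" "F \<subseteq> {1..c}"
  shows "gens fi \<subseteq> fs.span (\<Union>j\<in>{m + c + 1..m + 2 * c} \<union> contraction_set m c Hi F. gens j) \<longleftrightarrow>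
    (\<forall>z\<in>msgs m n. (\<forall>j\<in>Hi. z j = (\<lambda>_. 0)) \<longrightarrow> {k. lin_encode m n c L z k \<noteq> 0} \<subseteq> F \<longrightarrow>
      z fi = (\<lambda>_. 0))"
  using demand_vanishes_of_demand_in_span[OF assms] demand_in_span_of_demand_vanishes[OF assms] by blast

lemma separating_iff_demand_in_span:
  assumes fi: "fi \<in> {1..m}" and d: "2 * d \<le> c"
  shows "separating m n c L fi Hi d \<longleftrightarrow> (\<forall>F. F \<subseteq> {1..c} \<and> card F = 2 * d \<longrightarrow>
    gens fi \<subseteq> fs.span (\<Union>j\<in>{m + c + 1..m + 2 * c} \<union> contraction_set m c Hi F. gens j))"
proof (intro iffI allI impI)
  fix F assume sep: "separating m n c L fi Hi d" and "F \<subseteq> {1..c} \<and> card F = 2 * d"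
  then have F: "F \<subseteq> {1..c}" "card F = 2 * d"
    by simp_all
  show "gens fi \<subseteq> fs.span (\<Union>j\<in>{m + c + 1..m + 2 * c} \<union> contraction_set m c Hi F. gens j)"
  proof (subst demand_in_span_iff[OF fi F(1)], intro ballI impI)
    fix z assume z: "z \<in> msgs m n" "\<forall>j\<in>Hi. z j = (\<lambda>_. 0)"
      and supp: "{k. lin_encode m n c L z k \<noteq> 0} \<subseteq> F"
    have "hweight (lin_encode m n c L z) \<le> card F"
      unfolding hweight_def by (rule card_mono[OF finite_subset[OF F(1)] supp]) simp
    then show "z fi = (\<lambda>_. 0)"
      using sep z F(2) by (simp add: separating_def)
  qed
next
  assume incl: "\<forall>F. F \<subseteq> {1..c} \<and> card F = 2 * d \<longrightarrow>
    gens fi \<subseteq> fs.span (\<Union>j\<in>{m + c + 1..m + 2 * c} \<union> contraction_set m c Hi F. gens j)"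
  show "separating m n c L fi Hi d"
    unfolding separating_def
  proof (intro ballI impI)
    fix z assume z: "z \<in> msgs m n" "\<forall>j\<in>Hi. z j = (\<lambda>_. 0)"
      and weight: "hweight (lin_encode m n c L z) \<le> 2 * d"
    have "{k. lin_encode m n c L z k \<noteq> 0} \<subseteq> {1..c}"
      using lin_encode_fvec[of m n c L z] by (auto simp: fvec_def)
    moreover have "card {k. lin_encode m n c L z k \<noteq> 0} \<le> 2 * d" "2 * d \<le> card {1..c}"
      using weight d by (simp_all add: hweight_def)
    ultimately obtain F where F: "{k. lin_encode m n c L z k \<noteq> 0} \<subseteq> F" "F \<subseteq> {1..c}" "card F = 2 * d"
      by (rule exists_card_between[OF finite_atLeastAtMost])
    then have "gens fi \<subseteq> fs.span (\<Union>j\<in>{m + c + 1..m + 2 * c} \<union> contraction_set m c Hi F. gens j)"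
      using incl by simp
    then show "z fi = (\<lambda>_. 0)"
      unfolding demand_in_span_iff[OF fi F(2)] using z F(1) by blast
  qed
qed

lemma contr_rank_eq_iff_subset_span:
  assumes rank: "\<And>A. A \<subseteq> {1..m + 2 * c} \<Longrightarrow> pm_rank D A = rank_gens A"
    and X: "X \<subseteq> {1..m + 2 * c}" and S: "S \<subseteq> {1..m + 2 * c}" and T: "T \<subseteq> {1..m + 2 * c}"
  shows "contr_rank (pm_rank D) T (X \<union> S) = contr_rank (pm_rank D) T S \<longleftrightarrow>
    (\<Union>j\<in>X. gens j) \<subseteq> fs.span (\<Union>j\<in>S \<union> T. gens j)"
proof -
  have "rank_gens T \<le> rank_gens (S \<union> T)"
    using S T by (intro rank_mono) auto
  moreover have "rank_gens (S \<union> T) \<le> rank_gens (X \<union> S \<union> T)"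
    using X S T by (intro rank_mono) auto
  moreover have "contr_rank (pm_rank D) T (X \<union> S) = contr_rank (pm_rank D) T S \<longleftrightarrow>
      rank_gens (X \<union> (S \<union> T)) - rank_gens T = rank_gens (S \<union> T) - rank_gens T"
    using X S T by (simp add: contr_rank_def rank Un_assoc)
  ultimately have "contr_rank (pm_rank D) T (X \<union> S) = contr_rank (pm_rank D) T S \<longleftrightarrow>
      rank_gens (X \<union> (S \<union> T)) = rank_gens (S \<union> T)"
    by (simp add: Un_assoc) linarith
  also have "\<dots> \<longleftrightarrow> (\<Union>j\<in>X. gens j) \<subseteq> fs.span (\<Union>j\<in>S \<union> T. gens j)"
    unfolding rank_gens_def UN_Un[where A = X and B = "S \<union> T"]
    by (rule fs.dim_Un_eq_iff_subset_span[OF finite_UN_gens finite_UN_gens])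
  finally show ?thesis .
qed

lemma contraction_condition_iff_separating:
  assumes rank: "\<And>A. A \<subseteq> {1..m + 2 * c} \<Longrightarrow> pm_rank D A = rank_gens A"
    and fi: "fi \<in> {1..m}" and d: "2 * d \<le> c"
  shows "(\<forall>F. F \<subseteq> {1..c} \<and> card F = 2 * d \<longrightarrow>
      (let T = {1..m + c} - (({1..m} - Hi) \<union> (\<lambda>k. m + k) ` F); S = {m + c + 1..m + 2 * c}
       in contr_rank (pm_rank D) T ({fi} \<union> S) = contr_rank (pm_rank D) T S))
    \<longleftrightarrow> separating m n c L fi Hi d"
proof -
  have "contr_rank (pm_rank D) (contraction_set m c Hi F) ({fi} \<union> {m + c + 1..m + 2 * c}) =
      contr_rank (pm_rank D) (contraction_set m c Hi F) {m + c + 1..m + 2 * c} \<longleftrightarrow>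
    gens fi \<subseteq> fs.span (\<Union>j\<in>{m + c + 1..m + 2 * c} \<union> contraction_set m c Hi F. gens j)" for F
    using fi by (subst contr_rank_eq_iff_subset_span[OF rank]) (auto simp: contraction_set_def)
  then show ?thesis
    unfolding separating_iff_demand_in_span[OF fi d] by (simp add: contraction_set_def Let_def)
qed

lemma rank_conditions:
  assumes rank: "\<And>A. A \<subseteq> {1..m + 2 * c} \<Longrightarrow> pm_rank D A = rank_gens A"
  shows "pm_rank D {1..m + 2 * c} = m * n + c \<and> (\<forall>j\<in>{1..m}. pm_rank D {j} = n) \<and>
    pm_rank D {1..m + c} = m * n + c \<and> (\<forall>j\<in>{1..2 * c}. pm_rank D {m + j} = 1) \<and>
    (\<forall>j\<in>{1..c}. pm_rank D ({1..m} \<union> {m + j, m + c + j}) = pm_rank D ({1..m} \<union> {m + j}) \<and>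
      pm_rank D ({1..m} \<union> {m + j}) = pm_rank D ({1..m} \<union> {m + c + j}))"
  using rank_gens_all rank_gens_msg rank_gens_msgs_errs rank_gens_err_or_col
    rank_gens_err_col rank_gens_err_eq_col by (auto simp: rank)

end

lemma inj_unit_vec: "inj (unit_vec :: nat \<Rightarrow> nat \<Rightarrow> 'a::zero_neq_one)"
  by (rule injI) (metis unit_vec_def one_neq_zero)

lemma unit_vec_supported_below: "t < K \<Longrightarrow> unit_vec t \<in> supported_below K"
  by (simp add: unit_vec_def supported_below_def)

lemma independent_unit_vec: "finite S \<Longrightarrow> fs.independent (unit_vec ` S :: (nat \<Rightarrow> 'a::field) set)"
proof (rule fs.independent_if_scalars_zero)
  fix a :: "(nat \<Rightarrow> 'a) \<Rightarrow> 'a" and v :: "nat \<Rightarrow> 'a"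
  assume S: "finite S" and sum: "(\<Sum>x\<in>unit_vec ` S. fscale (a x) x) = 0" and v: "v \<in> unit_vec ` S"
  then obtain t where t: "t \<in> S" "v = unit_vec t"
    by blast
  have "a (unit_vec s) * unit_vec s t = (if s = t then a v else 0)" for s
    using t(2) by (simp add: unit_vec_def)
  then have "(\<Sum>x\<in>unit_vec ` S. fscale (a x) x) t = a v"
    using S t(1) by (simp add: sum_apply fscale_apply sum.reindex[OF inj_on_subset[OF inj_unit_vec]])
  then show "a v = 0"
    using sum by simp
qed simp

lemma standard_family_unit_vec: "standard_family m n c (unit_vec :: nat \<Rightarrow> nat \<Rightarrow> 'a::field)"
  using inj_on_subset[OF inj_unit_vec] independent_unit_vec by unfold_locales auto

lemma (in standard_family) representable_polymatroid_of:
  assumes supported: "\<And>r. r \<in> {1..m * n + c} \<Longrightarrow> e r \<in> supported_below K"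
  shows "pm_representable (m + 2 * c) (polymatroid_of (m + 2 * c) rank_gens) TYPE('a)"
  unfolding pm_representable_def
proof (intro exI[where x = K] exI[where x = "\<lambda>j. fs.span (gens j)"] conjI ballI allI impI)
  fix j
  show "fs.subspace (fs.span (gens j))"
    by (rule fs.subspace_span)
  have "fs.span (e ` {1..m * n + c}) \<subseteq> supported_below K"
    using supported by (intro fs.span_minimal[OF _ subspace_supported_below]) blast
  then have "gens j \<subseteq> supported_below K"
    using gens_subset_span by blast
  then have "fs.span (gens j) \<subseteq> supported_below K"
    by (rule fs.span_minimal[OF _ subspace_supported_below])
  then show "fs.span (gens j) \<subseteq> {v. \<forall>t\<ge>K. v t = 0}"
    by (simp add: supported_below_def)
next
  fix A assume "A \<subseteq> {1..m + 2 * c}"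
  then show "fs.dim (fs.span (\<Union>j\<in>A. fs.span (gens j))) = pm_rank (polymatroid_of (m + 2 * c) rank_gens) A"
    by (simp add: fs.span_UN_span rank_gens_def[symmetric] pm_rank_polymatroid_of)
qed

section \<open>Linear codes from representations\<close>

text \<open>A representation satisfying (A) and (B). Over a finite field the subspaces \<open>V j\<close> are finite
  sets, which is what the dimension lemmas above need.\<close>

locale subspace_representation =
  fixes m n c K :: nat and V :: "nat \<Rightarrow> (nat \<Rightarrow> 'a::{field,finite}) set" and D :: "(nat \<Rightarrow> nat) set"
  assumes subspace_V: "j \<in> {1..m + 2 * c} \<Longrightarrow> fs.subspace (V j)"
    and V_supported: "j \<in> {1..m + 2 * c} \<Longrightarrow> V j \<subseteq> supported_below K"
    and dim_span_V: "A \<subseteq> {1..m + 2 * c} \<Longrightarrow> fs.dim (fs.span (\<Union>j\<in>A. V j)) = pm_rank D A"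
    and rank_msg: "j \<in> {1..m} \<Longrightarrow> pm_rank D {j} = n"
    and rank_msgs_errs: "pm_rank D {1..m + c} = m * n + c"
    and rank_single: "j \<in> {1..2 * c} \<Longrightarrow> pm_rank D {m + j} = 1"
    and rank_err_col: "k \<in> {1..c} \<Longrightarrow> pm_rank D ({1..m} \<union> {m + k, m + c + k}) = pm_rank D ({1..m} \<union> {m + k})"
    and rank_err_eq_col: "k \<in> {1..c} \<Longrightarrow> pm_rank D ({1..m} \<union> {m + k}) = pm_rank D ({1..m} \<union> {m + c + k})"
begin

lemma finite_V: "j \<in> {1..m + 2 * c} \<Longrightarrow> finite (V j)"
  using finite_subset[OF V_supported finite_supported_below] .

lemma exists_basis_V:
  assumes j: "j \<in> {1..m + 2 * c}"
  obtains B where "B \<subseteq> V j" "V j = fs.span B" "card B = pm_rank D {j}"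
proof -
  obtain B where B: "B \<subseteq> V j" "fs.independent B" "V j \<subseteq> fs.span B" "card B = fs.dim (V j)"
    using fs.basis_exists by blast
  moreover have "fs.dim (V j) = pm_rank D {j}"
    using dim_span_V[of "{j}"] j by simp
  ultimately show thesis
    using that[OF B(1)] fs.span_subspace[OF B(1,3) subspace_V[OF j]] by simp
qed

lemma exists_msg_basis:
  assumes "j \<in> {1..m}"
  shows "\<exists>w. w ` {1..n} \<subseteq> V j \<and> V j = fs.span (w ` {1..n})"
proof -
  obtain B where B: "B \<subseteq> V j" "V j = fs.span B" "card B = n"
    using exists_basis_V[of j] rank_msg assms by auto
  moreover have "finite B"
    using finite_subset[OF B(1) finite_V] assms by simp
  then obtain w where "bij_betw w {1..card B} B"
    using ex_bij_betw_nat_finite_1 by blast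
  ultimately show ?thesis
    by (metis bij_betw_imp_surj_on)
qed

lemma exists_line_gen:
  assumes "j \<in> {1..2 * c}"
  shows "\<exists>b. b \<in> V (m + j) \<and> V (m + j) = fs.span {b}"
proof -
  obtain B where "B \<subseteq> V (m + j)" "V (m + j) = fs.span B" "card B = 1"
    using exists_basis_V[of "m + j"] rank_single[OF assms] assms by auto
  then show ?thesis
    by (metis card_1_singletonE insert_subset)
qed

definition msg_basis :: "nat \<Rightarrow> nat \<Rightarrow> nat \<Rightarrow> 'a" where
  "msg_basis j = (SOME w. w ` {1..n} \<subseteq> V j \<and> V j = fs.span (w ` {1..n}))"

definition line_gen :: "nat \<Rightarrow> nat \<Rightarrow> 'a" where
  "line_gen j = (SOME b. b \<in> V (m + j) \<and> V (m + j) = fs.span {b})"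

definition basis_vec :: "nat \<Rightarrow> nat \<Rightarrow> 'a" where
  "basis_vec r = (if r \<le> m * n then msg_basis (msg_of_row n r) (coord_of_row n r)
     else line_gen (r - m * n))"

lemma msg_basis: "j \<in> {1..m} \<Longrightarrow> msg_basis j ` {1..n} \<subseteq> V j \<and> V j = fs.span (msg_basis j ` {1..n})"
  unfolding msg_basis_def by (rule someI_ex[OF exists_msg_basis])

lemma line_gen: "j \<in> {1..2 * c} \<Longrightarrow> line_gen j \<in> V (m + j) \<and> V (m + j) = fs.span {line_gen j}"
  unfolding line_gen_def by (rule someI_ex[OF exists_line_gen])

lemma V_msg: "j \<in> {1..m} \<Longrightarrow> V j = fs.span (basis_vec ` row n j ` {1..n})"
proof -
  assume j: "j \<in> {1..m}"
  have "basis_vec (row n j s) = msg_basis j s" if "s \<in> {1..n}" for s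
    using row_mem[OF j that] j that by (simp add: basis_vec_def msg_of_row_row coord_of_row_row)
  then have "basis_vec ` row n j ` {1..n} = msg_basis j ` {1..n}"
    by (simp add: image_image)
  then show ?thesis
    using msg_basis[OF j] by simp
qed

lemma V_err: "k \<in> {1..c} \<Longrightarrow> V (m + k) = fs.span {basis_vec (m * n + k)}"
  using line_gen[of k] by (simp add: basis_vec_def)

definition spanning_set :: "nat \<Rightarrow> (nat \<Rightarrow> 'a) set" where
  "spanning_set j = (if j \<le> m then basis_vec ` row n j ` {1..n}
     else if j \<le> m + c then {basis_vec (m * n + (j - m))} else {line_gen (j - m)})"

lemma V_eq_span_spanning_set:
  assumes j: "j \<in> {1..m + 2 * c}"
  shows "V j = fs.span (spanning_set j)"
proof -
  consider "j \<le> m" | "\<not> j \<le> m" "j \<le> m + c" | "\<not> j \<le> m + c"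
    by blast
  then show ?thesis
  proof cases
    case 1
    then show ?thesis
      using V_msg[of j] j by (simp add: spanning_set_def)
  next
    case 2
    then have "j - m \<in> {1..c}"
      by auto
    then show ?thesis
      using V_err[of "j - m"] 2 by (simp add: spanning_set_def)
  next
    case 3
    then have "j - m \<in> {1..2 * c}"
      using j by auto
    then show ?thesis
      using line_gen[of "j - m"] 3 by (simp add: spanning_set_def)
  qed
qed

lemma dim_UN_spanning_set: "A \<subseteq> {1..m + 2 * c} \<Longrightarrow> fs.dim (\<Union>j\<in>A. spanning_set j) = pm_rank D A"
proof -
  assume A: "A \<subseteq> {1..m + 2 * c}"
  then have "fs.span (\<Union>j\<in>A. V j) = fs.span (\<Union>j\<in>A. fs.span (spanning_set j))"
    using V_eq_span_spanning_set by (metis (no_types, lifting) SUP_cong subsetD)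
  then show ?thesis
    using dim_span_V[OF A] by (simp add: fs.span_UN_span)
qed

lemma UN_spanning_set_msgs: "(\<Union>j\<in>{1..m}. spanning_set j) = basis_vec ` {1..m * n}"
proof -
  have "(\<Union>j\<in>{1..m}. spanning_set j) = basis_vec ` (\<Union>j\<in>{1..m}. row n j ` {1..n})"
    by (simp add: spanning_set_def image_UN)
  then show ?thesis
    by (simp only: UN_rows)
qed

lemma UN_spanning_set_msgs_errs: "(\<Union>j\<in>{1..m + c}. spanning_set j) = basis_vec ` {1..m * n + c}"
proof -
  have "(\<Union>j\<in>{m + 1..m + c}. spanning_set j) = basis_vec ` (\<lambda>j. m * n + (j - m)) ` {m + 1..m + c}"
    by (auto simp: spanning_set_def)
  moreover have "(\<lambda>j. m * n + (j - m)) ` {m + 1..m + c} = {m * n + 1..m * n + c}"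
    by (rule image_shift_atLeastAtMost)
  moreover have "{1..m + c} = {1..m} \<union> {m + 1..m + c}" "{1..m * n + c} = {1..m * n} \<union> {m * n + 1..m * n + c}"
    by auto
  ultimately show ?thesis
    using UN_spanning_set_msgs by (simp add: image_Un)
qed

lemma
  shows card_basis_vec: "card (basis_vec ` {1..m * n + c}) = m * n + c"
    and independent_basis_vec: "fs.independent (basis_vec ` {1..m * n + c})"
proof -
  have dim: "fs.dim (basis_vec ` {1..m * n + c}) = m * n + c"
    using dim_UN_spanning_set[of "{1..m + c}"] rank_msgs_errs unfolding UN_spanning_set_msgs_errs by simp
  moreover have "fs.dim (basis_vec ` {1..m * n + c}) \<le> card (basis_vec ` {1..m * n + c})"
    by (rule fs.dim_le_card') simp
  moreover have "card (basis_vec ` {1..m * n + c}) \<le> m * n + c"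
    using card_image_le[of "{1..m * n + c}" basis_vec] by simp
  ultimately show card: "card (basis_vec ` {1..m * n + c}) = m * n + c"
    by linarith
  show "fs.independent (basis_vec ` {1..m * n + c})"
    using dim card by (intro fs.independent_of_dim_eq_card) simp_all
qed

lemma standard_family_basis_vec: "standard_family m n c basis_vec"
proof
  show "inj_on basis_vec {1..m * n + c}"
    using card_basis_vec by (intro eq_card_imp_inj_on) simp_all
qed (rule independent_basis_vec)

text \<open>Conditions (B) say that the receiver vector and the error vector of position \<open>k\<close> each lie in
  the span of the other together with the message basis.\<close>

lemma
  assumes k: "k \<in> {1..c}"
  shows rcv_mem_span_err: "line_gen (c + k) \<in> fs.span (insert (basis_vec (m * n + k)) (basis_vec ` {1..m * n}))"
    and err_mem_span_rcv: "basis_vec (m * n + k) \<in> fs.span (insert (line_gen (c + k)) (basis_vec ` {1..m * n}))"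
proof -
  let ?M = "basis_vec ` {1..m * n}" and ?b = "basis_vec (m * n + k)" and ?g = "line_gen (c + k)"
  have UN_spanning_set_Un: "(\<Union>j\<in>{1..m} \<union> B. spanning_set j) = (\<Union>j\<in>B. spanning_set j) \<union> ?M" for B
    by (simp only: UN_Un UN_spanning_set_msgs Un_commute)
  have "spanning_set (m + k) = {?b}" "spanning_set (m + c + k) = {?g}"
    using k by (simp_all add: spanning_set_def)
  then have "(\<Union>j\<in>{1..m} \<union> {m + k, m + c + k}. spanning_set j) = {?g} \<union> insert ?b ?M"
    and "(\<Union>j\<in>{1..m} \<union> {m + k}. spanning_set j) = insert ?b ?M"
    and "(\<Union>j\<in>{1..m} \<union> {m + c + k}. spanning_set j) = insert ?g ?M"
    unfolding UN_spanning_set_Un by auto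
  then have dim_both: "fs.dim ({?g} \<union> insert ?b ?M) = pm_rank D ({1..m} \<union> {m + k, m + c + k})"
    and dim_b: "fs.dim (insert ?b ?M) = pm_rank D ({1..m} \<union> {m + k})"
    and dim_g: "fs.dim (insert ?g ?M) = pm_rank D ({1..m} \<union> {m + c + k})"
    using dim_UN_spanning_set[of "{1..m} \<union> {m + k, m + c + k}"] dim_UN_spanning_set[of "{1..m} \<union> {m + k}"]
      dim_UN_spanning_set[of "{1..m} \<union> {m + c + k}"] k by auto
  show "?g \<in> fs.span (insert ?b ?M)"
    using fs.dim_Un_eq_iff_subset_span[of "{?g}" "insert ?b ?M"] dim_both dim_b rank_err_col[OF k] by simp
  have "{?b} \<union> insert ?g ?M = {?g} \<union> insert ?b ?M"
    by blast
  then show "?b \<in> fs.span (insert ?g ?M)"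
    using fs.dim_Un_eq_iff_subset_span[of "{?b}" "insert ?g ?M"] dim_both dim_b dim_g
      rank_err_col[OF k] rank_err_eq_col[OF k] by simp
qed

lemma receiver_decomposition:
  assumes k: "k \<in> {1..c}"
  shows "\<exists>\<beta> \<alpha>. \<beta> \<noteq> 0 \<and>
    line_gen (c + k) = fscale \<beta> (basis_vec (m * n + k)) + (\<Sum>r\<in>{1..m * n}. fscale (\<alpha> r) (basis_vec r))"
proof -
  interpret fam: standard_family m n c basis_vec "\<lambda>_ _. 0"
    by (rule standard_family_basis_vec)
  let ?M = "basis_vec ` {1..m * n}" and ?b = "basis_vec (m * n + k)" and ?g = "line_gen (c + k)"
  have inj_M: "inj_on basis_vec {1..m * n}"
    by (rule inj_on_subset[OF fam.inj_on_e]) auto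
  obtain \<beta> where \<beta>: "?g - fscale \<beta> ?b \<in> fs.span ?M"
    using fs.span_breakdown_eq[of ?g ?b ?M] rcv_mem_span_err[OF k] by blast
  then have "?g - fscale \<beta> ?b \<in> range (\<lambda>u. \<Sum>v\<in>?M. fscale (u v) v)"
    by (simp add: fs.span_finite)
  then obtain u where "?g - fscale \<beta> ?b = (\<Sum>v\<in>?M. fscale (u v) v)"
    by blast
  also have "\<dots> = (\<Sum>r\<in>{1..m * n}. fscale (u (basis_vec r)) (basis_vec r))"
    by (simp only: sum.reindex[OF inj_M] comp_def)
  finally have decomposition:
    "?g = fscale \<beta> ?b + (\<Sum>r\<in>{1..m * n}. fscale (u (basis_vec r)) (basis_vec r))"
    by (simp add: diff_eq_eq add.commute)
  have "\<beta> \<noteq> 0"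
  proof
    assume "\<beta> = 0"
    then have "insert ?g ?M \<subseteq> fs.span ?M"
      using \<beta> fs.span_superset by simp
    then have "fs.span (insert ?g ?M) \<subseteq> fs.span ?M"
      by (rule fs.span_minimal[OF _ fs.subspace_span])
    then show False
      using err_mem_span_rcv[OF k] fam.err_notin_span_msgs[OF k] by blast
  qed
  with decomposition show ?thesis
    by (intro exI[of _ \<beta>] exI[of _ "\<lambda>r. u (basis_vec r)"] conjI)
qed

end

context subspace_representation
begin

lemma receiver_coefficients:
  "\<exists>L. \<forall>k\<in>{1..c}. V (m + c + k) =
    fs.span {basis_vec (m * n + k) + (\<Sum>r\<in>{1..m * n}. fscale (L r k) (basis_vec r))}"
proof -
  define decomposes where "decomposes k \<beta> \<alpha> \<longleftrightarrow> \<beta> \<noteq> 0 \<and> line_gen (c + k) =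
      fscale \<beta> (basis_vec (m * n + k)) + (\<Sum>r\<in>{1..m * n}. fscale (\<alpha> r) (basis_vec r))"
    for k \<beta> and \<alpha> :: "nat \<Rightarrow> 'a"
  define \<beta> where "\<beta> k = (SOME \<beta>. \<exists>\<alpha>. decomposes k \<beta> \<alpha>)" for k
  define \<alpha> where "\<alpha> k = (SOME \<alpha>. decomposes k (\<beta> k) \<alpha>)" for k
  have ex_\<alpha>: "\<exists>\<alpha>. decomposes k (\<beta> k) \<alpha>" if "k \<in> {1..c}" for k
    unfolding \<beta>_def by (rule someI_ex) (use receiver_decomposition[OF that] in \<open>simp add: decomposes_def\<close>)
  have "decomposes k (\<beta> k) (\<alpha> k)" if "k \<in> {1..c}" for k
    unfolding \<alpha>_def by (rule someI_ex[OF ex_\<alpha>[OF that]])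
  then have \<beta>\<alpha>: "\<beta> k \<noteq> 0" "line_gen (c + k) =
      fscale (\<beta> k) (basis_vec (m * n + k)) + (\<Sum>r\<in>{1..m * n}. fscale (\<alpha> k r) (basis_vec r))"
    if "k \<in> {1..c}" for k
    using that by (simp_all add: decomposes_def)
  have "V (m + c + k) =
      fs.span {basis_vec (m * n + k) + (\<Sum>r\<in>{1..m * n}. fscale (\<alpha> k r / \<beta> k) (basis_vec r))}"
    if k: "k \<in> {1..c}" for k
  proof -
    have "basis_vec (m * n + k) + (\<Sum>r\<in>{1..m * n}. fscale (\<alpha> k r / \<beta> k) (basis_vec r)) =
        fscale (inverse (\<beta> k)) (line_gen (c + k))"
      using \<beta>\<alpha>[OF k] by (simp add: fs.scale_right_distrib fs.scale_sum_right divide_inverse mult.commute)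
    moreover have "V (m + c + k) = fs.span {line_gen (c + k)}"
      using line_gen[of "c + k"] k by (simp add: add.assoc)
    ultimately show ?thesis
      using \<beta>\<alpha>(1)[OF k] fs.span_image_scale[of "{line_gen (c + k)}" "\<lambda>_. inverse (\<beta> k)"] by simp
  qed
  then show ?thesis
    by (intro exI[of _ "\<lambda>r k. \<alpha> k r / \<beta> k"]) simp
qed

lemma V_eq_span_gens:
  assumes L: "\<forall>k\<in>{1..c}. V (m + c + k) =
      fs.span {basis_vec (m * n + k) + (\<Sum>r\<in>{1..m * n}. fscale (L r k) (basis_vec r))}"
    and j: "j \<in> {1..m + 2 * c}"
  shows "V j = fs.span (standard_family.gens m n c basis_vec L j)"
proof -
  interpret fam: standard_family m n c basis_vec L
    by (rule standard_family_basis_vec)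
  consider "j \<le> m" | "\<not> j \<le> m" "j \<le> m + c" | "\<not> j \<le> m + c"
    by blast
  then show ?thesis
  proof cases
    case 1
    then show ?thesis
      using V_eq_span_spanning_set[OF j] j by (simp add: spanning_set_def fam.gens_msg)
  next
    case 2
    then show ?thesis
      using V_eq_span_spanning_set[OF j] j by (simp add: spanning_set_def fam.gens_def)
  next
    case 3
    define k where "k = j - m - c"
    then have "k \<in> {1..c}" "j = m + c + k"
      using j 3 by auto
    then show ?thesis
      using L fam.gens_col by (simp add: fam.col_def)
  qed
qed

lemma exists_standard_family:
  "\<exists>(e :: nat \<Rightarrow> nat \<Rightarrow> 'a) L. standard_family m n c e \<and>
    (\<forall>A\<subseteq>{1..m + 2 * c}. pm_rank D A = standard_family.rank_gens m n c e L A)"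
proof -
  obtain L where L: "\<forall>k\<in>{1..c}. V (m + c + k) =
      fs.span {basis_vec (m * n + k) + (\<Sum>r\<in>{1..m * n}. fscale (L r k) (basis_vec r))}"
    using receiver_coefficients by blast
  interpret fam: standard_family m n c basis_vec L
    by (rule standard_family_basis_vec)
  have "pm_rank D A = fam.rank_gens A" if A: "A \<subseteq> {1..m + 2 * c}" for A
  proof -
    have "fs.span (\<Union>j\<in>A. V j) = fs.span (\<Union>j\<in>A. fs.span (fam.gens j))"
      using V_eq_span_gens[OF L] A by (intro arg_cong[where f = fs.span] SUP_cong) auto
    then show ?thesis
      using dim_span_V[OF A] by (simp add: fam.rank_gens_def fs.span_UN_span)
  qed
  then show ?thesis
    using standard_family_basis_vec by blast
qed

end

lemma standard_family_of_representation:
  assumes "pm_representable (m + 2 * c) D TYPE('a::{field,finite})"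
    and "\<forall>j\<in>{1..m}. pm_rank D {j} = n" "pm_rank D {1..m + c} = m * n + c"
    and "\<forall>j\<in>{1..2 * c}. pm_rank D {m + j} = 1"
    and "\<forall>j\<in>{1..c}. pm_rank D ({1..m} \<union> {m + j, m + c + j}) = pm_rank D ({1..m} \<union> {m + j}) \<and>
      pm_rank D ({1..m} \<union> {m + j}) = pm_rank D ({1..m} \<union> {m + c + j})"
  shows "\<exists>(e :: nat \<Rightarrow> nat \<Rightarrow> 'a) L. standard_family m n c e \<and>
    (\<forall>A\<subseteq>{1..m + 2 * c}. pm_rank D A = standard_family.rank_gens m n c e L A)"
proof -
  obtain K and V :: "nat \<Rightarrow> (nat \<Rightarrow> 'a) set" where
    "\<forall>j\<in>{1..m + 2 * c}. fs.subspace (V j) \<and> V j \<subseteq> supported_below K"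
    "\<forall>A\<subseteq>{1..m + 2 * c}. fs.dim (fs.span (\<Union>j\<in>A. V j)) = pm_rank D A"
    using assms(1) by (auto simp: pm_representable_def supported_below_def)
  then interpret subspace_representation m n c K V D
    using assms(2-5) by unfold_locales auto
  show ?thesis
    by (rule exists_standard_family)
qed

definition ecic_polymatroid :: "nat \<Rightarrow> nat \<Rightarrow> nat \<Rightarrow> 'r set \<Rightarrow> ('r \<Rightarrow> nat) \<Rightarrow> ('r \<Rightarrow> nat set) \<Rightarrow>
    ('r \<Rightarrow> nat) \<Rightarrow> 'a::field itself \<Rightarrow> (nat \<Rightarrow> nat) set \<Rightarrow> bool" where
  "ecic_polymatroid m n c I f H \<delta> ty D \<longleftrightarrow>
    discrete_polymatroid (m + 2*c) D \<and> pm_representable (m + 2*c) D ty \<and>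
    pm_rank D {1..m + 2*c} = m*n + c \<and>
    (\<forall>j\<in>{1..m}. pm_rank D {j} = n) \<and>
    pm_rank D {1..m + c} = m*n + c \<and>
    (\<forall>j\<in>{1..2*c}. pm_rank D {m + j} = 1) \<and>
    (\<forall>j\<in>{1..c}.
       pm_rank D ({1..m} \<union> {m + j, m + c + j}) = pm_rank D ({1..m} \<union> {m + j}) \<and>
       pm_rank D ({1..m} \<union> {m + j}) = pm_rank D ({1..m} \<union> {m + c + j})) \<and>
    (\<forall>i\<in>I. \<forall>F. F \<subseteq> {1..c} \<and> card F = 2 * \<delta> i \<longrightarrow>
       (let T = {1..m + c} - (({1..m} - H i) \<union> (\<lambda>k. m + k) ` F);
            S = {m + c + 1..m + 2*c}
        in contr_rank (pm_rank D) T ({f i} \<union> S) = contr_rank (pm_rank D) T S))"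

lemma ecic_polymatroid_of_separating:
  fixes L :: "nat \<Rightarrow> nat \<Rightarrow> 'a::field"
  assumes f: "\<forall>i\<in>I. f i \<in> {1..m}" and \<delta>: "\<forall>i\<in>I. 2 * \<delta> i \<le> c"
    and sep: "\<forall>i\<in>I. separating m n c L (f i) (H i) (\<delta> i)"
  shows "\<exists>D. ecic_polymatroid m n c I f H \<delta> TYPE('a) D"
proof -
  interpret standard_family m n c unit_vec L
    by (rule standard_family_unit_vec)
  let ?D = "polymatroid_of (m + 2 * c) rank_gens"
  have rank: "\<And>A. A \<subseteq> {1..m + 2 * c} \<Longrightarrow> pm_rank ?D A = rank_gens A"
    by (rule pm_rank_polymatroid_of)
  have "pm_representable (m + 2 * c) ?D TYPE('a)"
    by (rule representable_polymatroid_of[where K = "m * n + c + 1"]) (simp add: unit_vec_supported_below)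
  moreover have "\<forall>i\<in>I. \<forall>F. F \<subseteq> {1..c} \<and> card F = 2 * \<delta> i \<longrightarrow>
      (let T = {1..m + c} - (({1..m} - H i) \<union> (\<lambda>k. m + k) ` F); S = {m + c + 1..m + 2 * c}
       in contr_rank (pm_rank ?D) T ({f i} \<union> S) = contr_rank (pm_rank ?D) T S)"
    using contraction_condition_iff_separating[OF rank] sep f \<delta> by simp
  ultimately show ?thesis
    using discrete_polymatroid_polymatroid_of rank_conditions[OF rank]
    by (intro exI[of _ ?D]) (simp add: ecic_polymatroid_def)
qed

lemma separating_of_ecic_polymatroid:
  assumes f: "\<forall>i\<in>I. f i \<in> {1..m}" and \<delta>: "\<forall>i\<in>I. 2 * \<delta> i \<le> c"
    and D: "ecic_polymatroid m n c I f H \<delta> TYPE('a::{field,finite}) D"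
  shows "\<exists>L :: nat \<Rightarrow> nat \<Rightarrow> 'a. \<forall>i\<in>I. separating m n c L (f i) (H i) (\<delta> i)"
proof -
  have "\<exists>(e :: nat \<Rightarrow> nat \<Rightarrow> 'a) L. standard_family m n c e \<and>
      (\<forall>A\<subseteq>{1..m + 2 * c}. pm_rank D A = standard_family.rank_gens m n c e L A)"
    using D by (intro standard_family_of_representation) (simp_all add: ecic_polymatroid_def)
  then obtain e :: "nat \<Rightarrow> nat \<Rightarrow> 'a" and L where fam: "standard_family m n c e"
    and rank: "\<And>A. A \<subseteq> {1..m + 2 * c} \<Longrightarrow> pm_rank D A = standard_family.rank_gens m n c e L A"
    by blast
  have "separating m n c L (f i) (H i) (\<delta> i)" if i: "i \<in> I" for i
  proof (rule iffD1[OF standard_family.contraction_condition_iff_separating[OF fam rank]])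
    show "f i \<in> {1..m}" "2 * \<delta> i \<le> c"
      using i f \<delta> by auto
    show "\<forall>F. F \<subseteq> {1..c} \<and> card F = 2 * \<delta> i \<longrightarrow>
      (let T = {1..m + c} - (({1..m} - H i) \<union> (\<lambda>k. m + k) ` F); S = {m + c + 1..m + 2 * c}
       in contr_rank (pm_rank D) T ({f i} \<union> S) = contr_rank (pm_rank D) T S)"
      using D i unfolding ecic_polymatroid_def by blast
  qed
  then show ?thesis
    by blast
qed

theorem theorem1:
  fixes m n c :: nat
    and I :: "'r set" and f :: "'r \<Rightarrow> nat" and H :: "'r \<Rightarrow> nat set" and \<delta> :: "'r \<Rightarrow> nat"
  assumes "finite I"
    and "\<forall>i\<in>I. f i \<in> {1..m}"
    and "\<forall>i\<in>I. H i \<subseteq> {1..m} - {f i}"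
    and "\<forall>i\<in>I. 2 * \<delta> i \<le> c"
  shows "is_vl_diff_ecic m n c I f H \<delta> TYPE('a::{field,finite}) \<longleftrightarrow>
    (\<exists>D. discrete_polymatroid (m + 2*c) D \<and> pm_representable (m + 2*c) D TYPE('a) \<and>
       pm_rank D {1..m + 2*c} = m*n + c \<and>
       (\<forall>j\<in>{1..m}. pm_rank D {j} = n) \<and>
       pm_rank D {1..m + c} = m*n + c \<and>
       (\<forall>j\<in>{1..2*c}. pm_rank D {m + j} = 1) \<and>
       (\<forall>j\<in>{1..c}.
          pm_rank D ({1..m} \<union> {m + j, m + c + j}) = pm_rank D ({1..m} \<union> {m + j}) \<and>
          pm_rank D ({1..m} \<union> {m + j}) = pm_rank D ({1..m} \<union> {m + c + j})) \<and>
       (\<forall>i\<in>I. \<forall>F. F \<subseteq> {1..c} \<and> card F = 2 * \<delta> i \<longrightarrow>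
          (let T = {1..m + c} - (({1..m} - H i) \<union> (\<lambda>k. m + k) ` F);
               S = {m + c + 1..m + 2*c}
           in contr_rank (pm_rank D) T ({f i} \<union> S) = contr_rank (pm_rank D) T S)))"
    (is "_ \<longleftrightarrow> (\<exists>D. ?polymatroid D)")
proof -
  have "(\<exists>D. ?polymatroid D) \<longleftrightarrow> (\<exists>D. ecic_polymatroid m n c I f H \<delta> TYPE('a) D)"
    by (simp only: ecic_polymatroid_def)
  also have "\<dots> \<longleftrightarrow> (\<exists>L :: nat \<Rightarrow> nat \<Rightarrow> 'a. \<forall>i\<in>I. separating m n c L (f i) (H i) (\<delta> i))"
  proof
    assume "\<exists>D. ecic_polymatroid m n c I f H \<delta> TYPE('a) D"
    then obtain D where "ecic_polymatroid m n c I f H \<delta> TYPE('a) D" ..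
    then show "\<exists>L :: nat \<Rightarrow> nat \<Rightarrow> 'a. \<forall>i\<in>I. separating m n c L (f i) (H i) (\<delta> i)"
      by (rule separating_of_ecic_polymatroid[OF assms(2,4)])
  next
    assume "\<exists>L :: nat \<Rightarrow> nat \<Rightarrow> 'a. \<forall>i\<in>I. separating m n c L (f i) (H i) (\<delta> i)"
    then obtain L :: "nat \<Rightarrow> nat \<Rightarrow> 'a" where "\<forall>i\<in>I. separating m n c L (f i) (H i) (\<delta> i)" ..
    then show "\<exists>D. ecic_polymatroid m n c I f H \<delta> TYPE('a) D"
      by (rule ecic_polymatroid_of_separating[OF assms(2,4)])
  qed
  finally show ?thesis
    by (simp only: is_vl_diff_ecic_iff_separating)
qed

end
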